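(* Let $\phi=\phi_{\underline\alpha}$ be a completely positive map in $\mathcal J_1$ given in Kraus form by $\underline\alpha=\{\alpha_i\}_{i\in\mathbb N}\subset\mathcal B(\mathcal H)$, and let $\mathcal A(\underline\alpha)$ be the (non-$\star$) algebra generated by the $\alpha_i^\star$ (including the identity). Then $\phi$ is ergodic if and only if every nonzero $x\in\mathcal H$ is cyclic for $\mathcal A(\underline\alpha)$, i.e. the closure of $\mathcal A(\underline\alpha)x$ is $\mathcal H$.
   Context: Let $\mathcal H$ be a complex separable Hilbert space, $\mathcal B(\mathcal H)$ the bounded operators, $\mathbb I$ the identity, and $\mathcal J_1$ the trace-class operators with norm $\|A\|_1=\operatorname{tr}|A|$, $|A|=(A^\star A)^{1/2}$. For self-adjoint $A$, $A\ge 0$ means $\langle x,Ax\rangle\ge 0$ for all $x$, and $A>0$ means $\langle x,Ax\rangle>0$ for all $x\ne0$. $\mathcal C_1=\{A\in\mathcal J_1:A\ge0\}$. A positive map in $\mathcal J_1$ is a linear map $\phi:\mathcal J_1\to\mathcal J_1$ with $\phi(\mathcal C_1)\subseteq\mathcal C_1$ (it is automatically bounded); it is $n$-positive if $\phi\otimes\mathrm{id}_{M_n}$ maps positive $n\times n$ operator matrices with entries in $\mathcal J_1$ to positive ones, and completely positive if it is $n$-positive for all $n$. Kraus form: given $\underline\alpha=\{\alpha_i\}_{i\in\mathbb N}\subset\mathcal B(\mathcal H)$ with $\sum_{i\in K}\alpha_i^\star\alpha_i\le c\,\mathbb I$ for all finite $K\subset\mathbb N$, $\phi_{\underline\alpha}(A)=\sum_i\alpha_iA\alpha_i^\star$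 (limit of finite partial sums). With $\exp(t\phi)=\sum_n t^n\phi^n/n!$, $\phi$ is ergodic if for every $A\in\mathcal C_1$, $A\ne0$, there is $t_A>0$ with $(\exp t_A\phi)(A)>0$. *)

theory Defs
  imports Complex_Main
begin

text \<open>A complex separable Hilbert space is modelled (up to unitary equivalence) as
  ell^2(I) for an index set I of natural numbers: square-summable sequences
  nat => complex vanishing outside I.  Bounded operators are functions on
  nat => complex, only their values on ell^2(I) being relevant.\<close>

type_synonym vec = "nat \<Rightarrow> complex"
type_synonym op = "vec \<Rightarrow> vec"

definition l2 :: "nat set \<Rightarrow> vec set" where
  "l2 I = {x. (\<forall>n. n \<notin> I \<longrightarrow> x n = 0) \<and> summable (\<lambda>n. (cmod (x n))\<^sup>2)}"

definition inner_l2 :: "vec \<Rightarrow> vec \<Rightarrow> complex" where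
  "inner_l2 x y = (\<Sum>n. cnj (x n) * y n)"

definition norm_l2 :: "vec \<Rightarrow> real" where
  "norm_l2 x = sqrt (\<Sum>n. (cmod (x n))\<^sup>2)"

definition ket :: "nat \<Rightarrow> vec" where
  "ket k = (\<lambda>n. if n = k then 1 else 0)"

definition bounded_op :: "nat set \<Rightarrow> op \<Rightarrow> bool" where
  "bounded_op I T \<longleftrightarrow>
     (\<forall>x\<in>l2 I. T x \<in> l2 I) \<and>
     (\<forall>x\<in>l2 I. \<forall>y\<in>l2 I. \<forall>a b. T (\<lambda>n. a * x n + b * y n) = (\<lambda>n. a * T x n + b * T y n)) \<and>
     (\<exists>C. \<forall>x\<in>l2 I. norm_l2 (T x) \<le> C * norm_l2 x)"

definition adj :: "nat set \<Rightarrow> op \<Rightarrow> op" where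
  "adj I T = (\<lambda>x m. if m \<in> I then inner_l2 (T (ket m)) x else 0)"

definition positive_op :: "nat set \<Rightarrow> op \<Rightarrow> bool" where
  "positive_op I A \<longleftrightarrow>
     (\<forall>x\<in>l2 I. inner_l2 x (A x) \<in> \<real> \<and> 0 \<le> Re (inner_l2 x (A x)))"

definition strictly_positive_op :: "nat set \<Rightarrow> op \<Rightarrow> bool" where
  "strictly_positive_op I A \<longleftrightarrow>
     (\<forall>x\<in>l2 I. x \<noteq> (\<lambda>n. 0) \<longrightarrow> inner_l2 x (A x) \<in> \<real> \<and> 0 < Re (inner_l2 x (A x)))"

text \<open>The cone C_1 of positive trace-class operators: for A >= 0 one has |A| = A,
  so tr|A| = sum over the basis e_n (n in I) of <e_n, A e_n>.\<close>
definition C1 :: "nat set \<Rightarrow> op \<Rightarrow> bool" where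
  "C1 I A \<longleftrightarrow> bounded_op I A \<and> positive_op I A \<and>
     summable (\<lambda>n. if n \<in> I then Re (inner_l2 (ket n) (A (ket n))) else 0)"

definition op_lim :: "nat set \<Rightarrow> (nat \<Rightarrow> op) \<Rightarrow> op" where
  "op_lim I S = (\<lambda>x. THE y. y \<in> l2 I \<and> (\<lambda>N. norm_l2 (\<lambda>n. S N x n - y n)) \<longlonglongrightarrow> 0)"

definition kraus :: "nat set \<Rightarrow> (nat \<Rightarrow> op) \<Rightarrow> op \<Rightarrow> op" where
  "kraus I \<alpha> A = op_lim I (\<lambda>N x n. \<Sum>i<N. \<alpha> i (A (adj I (\<alpha> i) x)) n)"

definition exp_kraus :: "nat set \<Rightarrow> (nat \<Rightarrow> op) \<Rightarrow> real \<Rightarrow> op \<Rightarrow> op" where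
  "exp_kraus I \<alpha> t A =
     op_lim I (\<lambda>N x n. \<Sum>k<N. complex_of_real (t ^ k / fact k) * ((kraus I \<alpha> ^^ k) A) x n)"

definition ergodic :: "nat set \<Rightarrow> (nat \<Rightarrow> op) \<Rightarrow> bool" where
  "ergodic I \<alpha> \<longleftrightarrow>
     (\<forall>A. C1 I A \<and> (\<exists>x\<in>l2 I. A x \<noteq> (\<lambda>n. 0)) \<longrightarrow>
        (\<exists>t>0. strictly_positive_op I (exp_kraus I \<alpha> t A)))"

inductive_set gen_alg :: "nat set \<Rightarrow> (nat \<Rightarrow> op) \<Rightarrow> op set" for I \<alpha> where
  alg_id: "id \<in> gen_alg I \<alpha>"
| alg_gen: "adj I (\<alpha> i) \<in> gen_alg I \<alpha>"
| alg_add: "a \<in> gen_alg I \<alpha> \<Longrightarrow> b \<in> gen_alg I \<alpha> \<Longrightarrow> (\<lambda>x n. a x n + b x n) \<in> gen_alg I \<alpha>"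
| alg_scale: "a \<in> gen_alg I \<alpha> \<Longrightarrow> (\<lambda>x n. c * a x n) \<in> gen_alg I \<alpha>"
| alg_mult: "a \<in> gen_alg I \<alpha> \<Longrightarrow> b \<in> gen_alg I \<alpha> \<Longrightarrow> a \<circ> b \<in> gen_alg I \<alpha>"

definition cyclic :: "nat set \<Rightarrow> (nat \<Rightarrow> op) \<Rightarrow> vec \<Rightarrow> bool" where
  "cyclic I \<alpha> x \<longleftrightarrow>
     (\<forall>y\<in>l2 I. \<forall>\<epsilon>>0. \<exists>a\<in>gen_alg I \<alpha>. norm_l2 (\<lambda>n. a x n - y n) < \<epsilon>)"

end

(* A positive trace-class operator A is peeled, Cholesky-style along the basis,
   into A = sum_m |g_m><g_m| with sum_m ||g_m||^2 = tr A.  Then phi^k(A) is the sum of the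
   |alpha_w g_m><alpha_w g_m| over words w of length k, absolutely convergent by the Kraus bound,
   and <x, exp(phi)(A) x> = sum_k 1/k! sum_{|w| = k, m} |<g_m, alpha_w^* x>|^2.  This vanishes only
   if A kills every alpha_w^* x; the set of such x is invariant under the alpha_i^*, so A then
   vanishes on A(alpha) x and, by continuity, on its closure, which is everything if x is cyclic.
   Conversely, if x is not cyclic, the projection theorem gives w <> 0 orthogonal to A(alpha) x;
   phi^k(|w><w|) vanishes on the alpha^*-invariant set A(alpha) x for every k, so
   <x, exp(t phi)(|w><w|) x> = 0 for all t and phi is not ergodic. *)

theory Submission
  imports Defs "HOL-Analysis.Analysis"
begin

section \<open>The Hilbert space of square-summable sequences\<close>

lemma summable_norm_sq_add:
  fixes x y :: "nat \<Rightarrow> 'a::real_normed_vector"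
  assumes "summable (\<lambda>n. (norm (x n))\<^sup>2)" "summable (\<lambda>n. (norm (y n))\<^sup>2)"
  shows "summable (\<lambda>n. (norm (x n + y n))\<^sup>2)"
proof (rule summable_comparison_test'[where g="\<lambda>n. 2 * (norm (x n))\<^sup>2 + 2 * (norm (y n))\<^sup>2" and N=0])
  show "summable (\<lambda>n. 2 * (norm (x n))\<^sup>2 + 2 * (norm (y n))\<^sup>2)"
    using assms by (intro summable_add summable_mult)
  fix n
  have "(norm (x n + y n))\<^sup>2 \<le> (norm (x n) + norm (y n))\<^sup>2"
    by (intro power_mono norm_triangle_ineq) simp
  also have "\<dots> \<le> 2 * (norm (x n))\<^sup>2 + 2 * (norm (y n))\<^sup>2"
    using sum_squares_bound[of "norm (x n)" "norm (y n)"] by (simp add: power2_sum)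
  finally show "norm ((norm (x n + y n))\<^sup>2) \<le> 2 * (norm (x n))\<^sup>2 + 2 * (norm (y n))\<^sup>2"
    by simp
qed

lemma summable_cnj_mult:
  assumes "summable (\<lambda>n. (cmod (x n))\<^sup>2)" "summable (\<lambda>n. (cmod (y n))\<^sup>2)"
  shows "summable (\<lambda>n. cnj (x n) * y n)"
proof (rule summable_comparison_test'[where g="\<lambda>n. (cmod (x n))\<^sup>2 + (cmod (y n))\<^sup>2" and N=0])
  show "summable (\<lambda>n. (cmod (x n))\<^sup>2 + (cmod (y n))\<^sup>2)"
    using assms by (rule summable_add)
  fix n
  show "norm (cnj (x n) * y n) \<le> (cmod (x n))\<^sup>2 + (cmod (y n))\<^sup>2"
    using sum_squares_bound[of "cmod (x n)" "cmod (y n)"]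
      mult_nonneg_nonneg[OF norm_ge_zero norm_ge_zero, of "x n" "y n"]
    unfolding norm_mult complex_mod_cnj by linarith
qed

lemma suminf_cnj: "summable f \<Longrightarrow> (\<Sum>n. cnj (f n)) = cnj (suminf f)"
  by (metis sums_cnj summable_sums sums_unique)

lemma cnj_mult_self: "cnj z * z = complex_of_real ((cmod z)\<^sup>2)"
  by (metis complex_norm_square mult.commute)

lemma mult_cnj_self: "z * cnj z = complex_of_real ((cmod z)\<^sup>2)"
  by (metis complex_norm_square)

lemma suminf_cnj_mult_self:
  "summable (\<lambda>n. (cmod (x n))\<^sup>2) \<Longrightarrow> (\<Sum>n. cnj (x n) * x n) = complex_of_real (\<Sum>n. (cmod (x n))\<^sup>2)"
  by (simp add: cnj_mult_self suminf_of_real)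

lemma Re_suminf_cnj_mult_self:
  "summable (\<lambda>n. (cmod (x n))\<^sup>2) \<Longrightarrow> Re (\<Sum>n. cnj (x n) * x n) = (\<Sum>n. (cmod (x n))\<^sup>2)"
  by (simp add: suminf_cnj_mult_self)

lemma Re_suminf_cnj_mult_commute:
  assumes x: "summable (\<lambda>n. (cmod (x n))\<^sup>2)" and y: "summable (\<lambda>n. (cmod (y n))\<^sup>2)"
  shows "Re (\<Sum>n. cnj (x n) * y n) = Re (\<Sum>n. cnj (y n) * x n)"
proof -
  have "(\<Sum>n. cnj (y n) * x n) = cnj (\<Sum>n. cnj (x n) * y n)"
    using suminf_cnj[OF summable_cnj_mult[OF x y]] by (simp add: mult.commute)
  then show ?thesis by simp
qed

lemma suminf_cnj_mult_add_left:
  assumes x: "summable (\<lambda>n. (cmod (x n))\<^sup>2)" and y: "summable (\<lambda>n. (cmod (y n))\<^sup>2)"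
    and z: "summable (\<lambda>n. (cmod (z n))\<^sup>2)"
  shows "(\<Sum>n. cnj (x n + y n) * z n) = (\<Sum>n. cnj (x n) * z n) + (\<Sum>n. cnj (y n) * z n)"
  using suminf_add[OF summable_cnj_mult[OF x z] summable_cnj_mult[OF y z]]
  by (simp add: distrib_right)

lemma suminf_scaled_cnj_mult:
  assumes x: "summable (\<lambda>n. (cmod (x n))\<^sup>2)" and y: "summable (\<lambda>n. (cmod (y n))\<^sup>2)"
  shows "(\<Sum>n. complex_of_real a * cnj (x n) * y n) = complex_of_real a * (\<Sum>n. cnj (x n) * y n)"
  using suminf_mult[OF summable_cnj_mult[OF x y], of "complex_of_real a"] by (simp add: mult.assoc)

typedef ell2 = "{x::nat \<Rightarrow> complex. summable (\<lambda>n. (cmod (x n))\<^sup>2)}"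
  morphisms vec_of mk_ell2
  by (rule exI[of _ "\<lambda>_. 0"]) simp

setup_lifting type_definition_ell2

text \<open>The complex space is treated as a real inner product space, with real inner product the
  real part of the complex one; complex scalars enter separately through \<open>cscale\<close> below.\<close>

instantiation ell2 :: real_inner
begin

lift_definition zero_ell2 :: ell2 is "\<lambda>n. 0" by simp

lift_definition plus_ell2 :: "ell2 \<Rightarrow> ell2 \<Rightarrow> ell2" is "\<lambda>x y n. x n + y n"
  by (rule summable_norm_sq_add)

lift_definition uminus_ell2 :: "ell2 \<Rightarrow> ell2" is "\<lambda>x n. - x n" by simp

lift_definition minus_ell2 :: "ell2 \<Rightarrow> ell2 \<Rightarrow> ell2" is "\<lambda>x y n. x n - y n"
  using summable_norm_sq_add[of _ "\<lambda>n. - _ n"] by simp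

lift_definition scaleR_ell2 :: "real \<Rightarrow> ell2 \<Rightarrow> ell2" is "\<lambda>r x n. complex_of_real r * x n"
  by (simp add: norm_mult power_mult_distrib summable_mult)

lift_definition norm_ell2 :: "ell2 \<Rightarrow> real" is "\<lambda>x. sqrt (\<Sum>n. (cmod (x n))\<^sup>2)" .

lift_definition inner_ell2 :: "ell2 \<Rightarrow> ell2 \<Rightarrow> real" is "\<lambda>x y. Re (\<Sum>n. cnj (x n) * y n)" .

definition dist_ell2 :: "ell2 \<Rightarrow> ell2 \<Rightarrow> real" where "dist_ell2 x y = norm (x - y)"

definition sgn_ell2 :: "ell2 \<Rightarrow> ell2" where "sgn_ell2 x = inverse (norm x) *\<^sub>R x"

definition uniformity_ell2 :: "(ell2 \<times> ell2) filter" where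
  "uniformity_ell2 = (INF e\<in>{0 <..}. principal {(x, y). dist x y < e})"

definition open_ell2 :: "ell2 set \<Rightarrow> bool" where
  "open_ell2 U \<longleftrightarrow> (\<forall>x\<in>U. eventually (\<lambda>(x', y). x' = x \<longrightarrow> y \<in> U) uniformity)"

instance
proof
  fix x y z :: ell2 and a b :: real
  show "x + y + z = x + (y + z)" by transfer (simp add: add.assoc)
  show "x + y = y + x" by transfer (simp add: add.commute)
  show "0 + x = x" by transfer simp
  show "- x + x = 0" by transfer simp
  show "x - y = x + - y" by transfer simp
  show "a *\<^sub>R (x + y) = a *\<^sub>R x + a *\<^sub>R y" by transfer (simp add: distrib_left)
  show "(a + b) *\<^sub>R x = a *\<^sub>R x + b *\<^sub>R x" by transfer (simp add: distrib_right)
  show "a *\<^sub>R b *\<^sub>R x = (a * b) *\<^sub>R x" by transfer (simp add: mult.assoc)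
  show "1 *\<^sub>R x = x" by transfer simp
  show "sgn x = inverse (norm x) *\<^sub>R x" by (rule sgn_ell2_def)
  show "dist x y = norm (x - y)" by (rule dist_ell2_def)
  show "(uniformity :: (ell2 \<times> ell2) filter) = (INF e\<in>{0 <..}. principal {(x, y). dist x y < e})"
    by (rule uniformity_ell2_def)
  show "open U = (\<forall>x\<in>U. \<forall>\<^sub>F (x', y) in uniformity. x' = x \<longrightarrow> y \<in> U)" for U :: "ell2 set"
    by (rule open_ell2_def)
  show "inner x y = inner y x"
    by transfer (rule Re_suminf_cnj_mult_commute)
  show "inner (x + y) z = inner x z + inner y z"
    by transfer (simp add: suminf_cnj_mult_add_left del: complex_cnj_add)
  show "inner (a *\<^sub>R x) y = a * inner x y"
    by transfer (simp add: suminf_scaled_cnj_mult)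
  show "0 \<le> inner x x"
    by transfer (simp add: Re_suminf_cnj_mult_self suminf_nonneg)
  show "(inner x x = 0) = (x = 0)"
    by transfer (simp add: Re_suminf_cnj_mult_self suminf_eq_zero_iff fun_eq_iff)
  show "norm x = sqrt (inner x x)"
    by transfer (simp add: Re_suminf_cnj_mult_self)
qed

end

lemma summable_norm_sq_vec_of [simp]: "summable (\<lambda>n. (cmod (vec_of x n))\<^sup>2)"
  using vec_of by auto

lemma vec_of_zero [simp]: "vec_of 0 = (\<lambda>n. 0)" by transfer simp
lemma vec_of_add [simp]: "vec_of (x + y) n = vec_of x n + vec_of y n" by transfer simp
lemma vec_of_diff [simp]: "vec_of (x - y) n = vec_of x n - vec_of y n" by transfer simp
lemma vec_of_scaleR [simp]: "vec_of (r *\<^sub>R x) n = complex_of_real r * vec_of x n" by transfer simp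

lemma vec_of_sum [simp]: "vec_of (sum f A) n = (\<Sum>a\<in>A. vec_of (f a) n)"
  by (induction A rule: infinite_finite_induct) auto

lemma power2_norm_ell2: "(norm x)\<^sup>2 = (\<Sum>n. (cmod (vec_of x n))\<^sup>2)"
  by transfer (simp add: suminf_nonneg)

lemma ell2_eqI: "(\<And>n. vec_of x n = vec_of y n) \<Longrightarrow> x = y"
  by (metis ext vec_of_inject)

lemma sum_norm_sq_vec_of_le: "finite F \<Longrightarrow> (\<Sum>n\<in>F. (cmod (vec_of x n))\<^sup>2) \<le> (norm x)\<^sup>2"
  unfolding power2_norm_ell2 by (rule sum_le_suminf) auto

lemma norm_vec_of_le: "cmod (vec_of x m) \<le> norm x"
proof -
  have "(cmod (vec_of x m))\<^sup>2 \<le> (norm x)\<^sup>2" using sum_norm_sq_vec_of_le[of "{m}" x] by simp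
  then show ?thesis by (rule power2_le_imp_le) simp
qed

lemma tendsto_vec_of: "(X \<longlongrightarrow> L) F \<Longrightarrow> ((\<lambda>k. vec_of (X k) m) \<longlongrightarrow> vec_of L m) F"
proof -
  assume "(X \<longlongrightarrow> L) F"
  then have "((\<lambda>k. norm (X k - L)) \<longlongrightarrow> 0) F" by (simp add: tendsto_norm_zero_iff LIM_zero)
  then have "((\<lambda>k. vec_of (X k) m - vec_of L m) \<longlongrightarrow> 0) F"
    by (rule tendsto_0_le[where K=1])
       (auto intro!: always_eventually simp: norm_vec_of_le[of "_ - L", simplified])
  then show ?thesis by (simp add: LIM_zero_iff)
qed

lemma sum_sq_coord_limit_le:
  fixes X :: "nat \<Rightarrow> ell2"
  assumes lim: "\<And>m. (\<lambda>j. vec_of (X j) m) \<longlonglongrightarrow> L m"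
    and near: "\<And>j. j \<ge> N \<Longrightarrow> norm (X j - X k) \<le> e"
  shows "summable (\<lambda>m. (cmod (L m - vec_of (X k) m))\<^sup>2)"
    and "(\<Sum>m. (cmod (L m - vec_of (X k) m))\<^sup>2) \<le> e\<^sup>2"
proof -
  have partial: "(\<Sum>m<M. (cmod (L m - vec_of (X k) m))\<^sup>2) \<le> e\<^sup>2" for M
  proof (rule LIMSEQ_le_const2)
    show "(\<lambda>j. \<Sum>m<M. (cmod (vec_of (X j) m - vec_of (X k) m))\<^sup>2)
        \<longlonglongrightarrow> (\<Sum>m<M. (cmod (L m - vec_of (X k) m))\<^sup>2)"
      by (intro tendsto_intros lim)
    have "(\<Sum>m<M. (cmod (vec_of (X j) m - vec_of (X k) m))\<^sup>2) \<le> e\<^sup>2" if "j \<ge> N" for j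
    proof -
      have "(\<Sum>m<M. (cmod (vec_of (X j) m - vec_of (X k) m))\<^sup>2) \<le> (norm (X j - X k))\<^sup>2"
        using sum_norm_sq_vec_of_le[of "{..<M}" "X j - X k"] by simp
      also have "\<dots> \<le> e\<^sup>2" using near[OF that] by (intro power_mono) auto
      finally show ?thesis .
    qed
    then show "\<exists>N. \<forall>j\<ge>N. (\<Sum>m<M. (cmod (vec_of (X j) m - vec_of (X k) m))\<^sup>2) \<le> e\<^sup>2"
      by blast
  qed
  show s: "summable (\<lambda>m. (cmod (L m - vec_of (X k) m))\<^sup>2)"
    by (rule summableI_nonneg_bounded[where x="e\<^sup>2"]) (use partial in auto)
  show "(\<Sum>m. (cmod (L m - vec_of (X k) m))\<^sup>2) \<le> e\<^sup>2"
    by (rule suminf_le_const[OF s]) (use partial in auto)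
qed

lemma Cauchy_vec_of:
  assumes "Cauchy X"
  shows "Cauchy (\<lambda>k. vec_of (X k) m)"
proof (rule metric_CauchyI)
  fix e :: real assume "0 < e"
  then obtain N where "\<forall>i\<ge>N. \<forall>j\<ge>N. dist (X i) (X j) < e" using assms metric_CauchyD by blast
  moreover have "dist (vec_of (X i) m) (vec_of (X j) m) \<le> dist (X i) (X j)" for i j
    using norm_vec_of_le[of "X i - X j" m] by (simp add: dist_norm)
  ultimately show "\<exists>N. \<forall>i\<ge>N. \<forall>j\<ge>N. dist (vec_of (X i) m) (vec_of (X j) m) < e"
    by (meson order_le_less_trans)
qed

lemma Cauchy_tail_bound:
  fixes X :: "nat \<Rightarrow> ell2"
  assumes C: "Cauchy X" and L: "\<And>m. (\<lambda>j. vec_of (X j) m) \<longlonglongrightarrow> L m" and "e > 0"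
  shows "\<exists>N. \<forall>k\<ge>N. summable (\<lambda>m. (cmod (L m - vec_of (X k) m))\<^sup>2) \<and>
    (\<Sum>m. (cmod (L m - vec_of (X k) m))\<^sup>2) \<le> e\<^sup>2"
proof -
  obtain N where N: "\<And>i j. i \<ge> N \<Longrightarrow> j \<ge> N \<Longrightarrow> norm (X i - X j) < e"
    using metric_CauchyD[OF C \<open>e > 0\<close>] by (auto simp: dist_norm)
  show ?thesis
  proof (intro exI allI impI)
    fix k assume "k \<ge> N"
    then have near: "norm (X j - X k) \<le> e" if "j \<ge> N" for j
      using N[OF that] less_imp_le by blast
    show "summable (\<lambda>m. (cmod (L m - vec_of (X k) m))\<^sup>2) \<and>
        (\<Sum>m. (cmod (L m - vec_of (X k) m))\<^sup>2) \<le> e\<^sup>2"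
      using sum_sq_coord_limit_le[OF L near] by blast
  qed
qed

instance ell2 :: complete_space
proof
  fix X :: "nat \<Rightarrow> ell2"
  assume C: "Cauchy X"
  define L where "L m = lim (\<lambda>k. vec_of (X k) m)" for m
  have L: "(\<lambda>k. vec_of (X k) m) \<longlonglongrightarrow> L m" for m
    unfolding L_def using Cauchy_vec_of[OF C] Cauchy_convergent_iff convergent_LIMSEQ_iff by blast
  note tail = Cauchy_tail_bound[OF C L]
  obtain N0 where "summable (\<lambda>m. (cmod (L m - vec_of (X N0) m))\<^sup>2)"
    using tail[of 1] by auto
  then have "summable (\<lambda>m. (cmod ((L m - vec_of (X N0) m) + vec_of (X N0) m))\<^sup>2)"
    by (intro summable_norm_sq_add) auto
  then have vec_of_L: "vec_of (mk_ell2 L) = L" by (simp add: mk_ell2_inverse)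
  have "X \<longlonglongrightarrow> mk_ell2 L"
  proof (rule LIMSEQ_I)
    fix r :: real assume r: "0 < r"
    obtain N where N: "\<And>k. k \<ge> N \<Longrightarrow> (\<Sum>m. (cmod (L m - vec_of (X k) m))\<^sup>2) \<le> (r/2)\<^sup>2"
      using tail[of "r/2"] r by auto
    have "norm (X k - mk_ell2 L) < r" if "k \<ge> N" for k
    proof -
      have "(norm (X k - mk_ell2 L))\<^sup>2 \<le> (r/2)\<^sup>2"
        using N[OF that] by (simp add: power2_norm_ell2 vec_of_L norm_minus_commute)
      then have "norm (X k - mk_ell2 L) \<le> r/2" by (rule power2_le_imp_le) (use r in simp)
      then show ?thesis using r by linarith
    qed
    then show "\<exists>N. \<forall>k\<ge>N. norm (X k - mk_ell2 L) < r" by blast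
  qed
  then show "convergent X" by (auto simp: convergent_def)
qed

instance ell2 :: banach ..

instance ell2 :: uniform_topological_group_add ..

section \<open>Complex structure\<close>

definition cinner :: "ell2 \<Rightarrow> ell2 \<Rightarrow> complex" where
  "cinner x y = (\<Sum>n. cnj (vec_of x n) * vec_of y n)"

lift_definition cscale :: "complex \<Rightarrow> ell2 \<Rightarrow> ell2" is "\<lambda>c x n. c * x n"
  by (simp add: norm_mult power_mult_distrib summable_mult)

lift_definition ket_ell2 :: "nat \<Rightarrow> ell2" is "\<lambda>k n. if n = k then 1 else 0"
  by (rule summable_finite[of "{k}" for k]) auto

lemma vec_of_cscale [simp]: "vec_of (cscale c x) n = c * vec_of x n" by transfer simp
lemma vec_of_ket_ell2: "vec_of (ket_ell2 k) n = (if n = k then 1 else 0)" by transfer simp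

lemma summable_cinner: "summable (\<lambda>n. cnj (vec_of x n) * vec_of y n)"
  by (rule summable_cnj_mult) auto

lemma cinner_add_right: "cinner x (y + z) = cinner x y + cinner x z"
  unfolding cinner_def using suminf_add[OF summable_cinner summable_cinner]
  by (simp add: distrib_left)

lemma cinner_cscale_right: "cinner x (cscale c y) = c * cinner x y"
  unfolding cinner_def using suminf_mult[OF summable_cinner, of c]
  by (simp add: mult.left_commute)

lemma cinner_commute: "cinner y x = cnj (cinner x y)"
  unfolding cinner_def using suminf_cnj[OF summable_cinner[of x y]] by (simp add: mult.commute)

lemma cinner_add_left: "cinner (x + y) z = cinner x z + cinner y z"
  by (metis cinner_add_right cinner_commute complex_cnj_add)

lemma cinner_cscale_left: "cinner (cscale c x) y = cnj c * cinner x y"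
  by (metis cinner_cscale_right cinner_commute complex_cnj_mult)

lemma diff_eq_add_cscale: "x - y = x + cscale (-1) y" by (rule ell2_eqI) simp

lemma cinner_diff_right: "cinner x (y - z) = cinner x y - cinner x z"
  by (simp add: diff_eq_add_cscale cinner_add_right cinner_cscale_right)

lemma cinner_zero_right [simp]: "cinner x 0 = 0" by (simp add: cinner_def)

lemma cinner_zero_left [simp]: "cinner 0 x = 0" by (simp add: cinner_def)

lemma cinner_sum_right: "cinner x (sum f A) = (\<Sum>a\<in>A. cinner x (f a))"
  by (induction A rule: infinite_finite_induct) (auto simp: cinner_add_right)

lemma cinner_sum_left: "cinner (sum f A) x = (\<Sum>a\<in>A. cinner (f a) x)"
  by (induction A rule: infinite_finite_induct) (auto simp: cinner_add_left)

lemma cscale_of_real: "cscale (complex_of_real r) x = r *\<^sub>R x" by (rule ell2_eqI) simp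

lemma Re_cinner: "Re (cinner x y) = inner x y"
  unfolding cinner_def by transfer simp

lemma cinner_self: "cinner x x = complex_of_real ((norm x)\<^sup>2)"
  unfolding cinner_def power2_norm_ell2 by (rule suminf_cnj_mult_self) simp

lemma power2_norm_eq_cinner: "(norm x)\<^sup>2 = Re (cinner x x)"
  by (simp add: cinner_self)

lemma cinner_self_eq_zero_iff [simp]: "cinner x x = 0 \<longleftrightarrow> x = 0"
  by (simp add: cinner_self)

lemma norm_cscale: "norm (cscale c x) = cmod c * norm x"
proof -
  have "(norm (cscale c x))\<^sup>2 = (\<Sum>n. (cmod c)\<^sup>2 * (cmod (vec_of x n))\<^sup>2)"
    by (simp add: power2_norm_ell2 norm_mult power_mult_distrib)
  also have "\<dots> = (cmod c * norm x)\<^sup>2"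
    by (simp add: power2_norm_ell2 suminf_mult power_mult_distrib)
  finally show ?thesis
    by (metis norm_ge_zero mult_nonneg_nonneg power2_eq_iff_nonneg)
qed

lemma cscale_cscale [simp]: "cscale c (cscale d x) = cscale (c * d) x"
  by (rule ell2_eqI) (simp add: mult.assoc)

lemma cscale_0_left [simp]: "cscale 0 x = 0"
  by (rule ell2_eqI) simp

lemma cscale_1_left [simp]: "cscale 1 x = x"
  by (rule ell2_eqI) simp

lemma cscale_0_right [simp]: "cscale c 0 = 0"
  by (rule ell2_eqI) simp

lemma cscale_add_left: "cscale (c + d) x = cscale c x + cscale d x"
  by (rule ell2_eqI) (simp add: distrib_right)

lemma cscale_diff_right: "cscale c (x - y) = cscale c x - cscale c y"
  by (rule ell2_eqI) (simp add: right_diff_distrib)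

lemma cscale_eq_0_iff [simp]: "cscale c x = 0 \<longleftrightarrow> c = 0 \<or> x = 0"
proof
  assume "cscale c x = 0"
  then have "cscale (inverse c) (cscale c x) = 0" by simp
  then show "c = 0 \<or> x = 0" by (cases "c = 0") simp_all
qed auto

lemma complex_Cauchy_Schwarz: "cmod (cinner x y) \<le> norm x * norm y"
proof (cases "cinner x y = 0")
  case True
  then show ?thesis by simp
next
  case False
  define u where "u = cinner x y / complex_of_real (cmod (cinner x y))"
  have "cmod u = 1" using False by (simp add: u_def norm_divide)
  have "cinner (cscale u x) y = complex_of_real ((cmod (cinner x y))\<^sup>2) / complex_of_real (cmod (cinner x y))"
    by (simp add: cinner_cscale_left u_def cnj_mult_self)
  also have "\<dots> = complex_of_real (cmod (cinner x y))"
    using False by (simp add: power2_eq_square)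
  finally have "cmod (cinner x y) = inner (cscale u x) y" by (metis Re_cinner Re_complex_of_real)
  also have "\<dots> \<le> norm (cscale u x) * norm y" by (rule norm_cauchy_schwarz)
  also have "\<dots> = norm x * norm y" by (simp add: norm_cscale \<open>cmod u = 1\<close>)
  finally show ?thesis .
qed

lemma bounded_bilinear_cinner: "bounded_bilinear cinner"
proof
  fix a a' b b' :: ell2 and r :: real
  show "cinner (a + a') b = cinner a b + cinner a' b" by (rule cinner_add_left)
  show "cinner a (b + b') = cinner a b + cinner a b'" by (rule cinner_add_right)
  show "cinner (r *\<^sub>R a) b = r *\<^sub>R cinner a b"
    by (simp add: cscale_of_real[symmetric] cinner_cscale_left scaleR_conv_of_real)
  show "cinner a (r *\<^sub>R b) = r *\<^sub>R cinner a b"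
    by (simp add: cscale_of_real[symmetric] cinner_cscale_right scaleR_conv_of_real)
  show "\<exists>K. \<forall>a b. norm (cinner a b) \<le> norm a * norm b * K"
    by (rule exI[of _ 1]) (simp add: complex_Cauchy_Schwarz)
qed

lemmas tendsto_cinner [tendsto_intros] = bounded_bilinear.tendsto[OF bounded_bilinear_cinner]

lemma bounded_linear_cinner_right: "bounded_linear (cinner x)"
  by (rule bounded_bilinear.bounded_linear_right[OF bounded_bilinear_cinner])

lemma cinner_ket_ell2_left [simp]: "cinner (ket_ell2 m) x = vec_of x m"
proof -
  have "cinner (ket_ell2 m) x = (\<Sum>n. if n = m then vec_of x m else 0)"
    unfolding cinner_def by (rule arg_cong[where f=suminf]) (auto simp: vec_of_ket_ell2)
  also have "\<dots> = vec_of x m" by (subst suminf_finite[of "{m}"]) auto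
  finally show ?thesis .
qed

lemma cinner_ket_ell2_right [simp]: "cinner x (ket_ell2 m) = cnj (vec_of x m)"
  by (metis cinner_commute cinner_ket_ell2_left)

lemma norm_ket_ell2 [simp]: "norm (ket_ell2 m) = 1"
proof -
  have "(norm (ket_ell2 m))\<^sup>2 = 1"
    using power2_norm_eq_cinner[of "ket_ell2 m"] by (simp add: vec_of_ket_ell2)
  then show ?thesis using norm_ge_zero[of "ket_ell2 m"] by (simp add: power2_eq_1_iff)
qed

definition truncate :: "nat \<Rightarrow> ell2 \<Rightarrow> ell2" where
  "truncate N x = (\<Sum>m<N. cscale (vec_of x m) (ket_ell2 m))"

lemma vec_of_truncate: "vec_of (truncate N x) n = (if n < N then vec_of x n else 0)"
  by (simp add: truncate_def vec_of_ket_ell2 if_distrib cong: if_cong)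

lemma power2_norm_diff_truncate:
  "(norm (x - truncate N x))\<^sup>2 = (\<Sum>n. (cmod (vec_of x (n + N)))\<^sup>2)"
proof -
  define f where "f n = (if n < N then 0 else (cmod (vec_of x n))\<^sup>2)" for n
  have "summable f"
    by (rule summable_comparison_test'[OF summable_norm_sq_vec_of[of x], where N=0])
       (auto simp: f_def)
  then have "suminf f = (\<Sum>n. f (n + N))"
    using suminf_split_initial_segment[of f N] by (simp add: f_def)
  moreover have "(norm (x - truncate N x))\<^sup>2 = suminf f"
    unfolding power2_norm_ell2 by (rule arg_cong[where f=suminf]) (auto simp: vec_of_truncate f_def)
  ultimately show ?thesis by (simp add: f_def)
qed

lemma truncate_tendsto: "(\<lambda>N. truncate N x) \<longlonglongrightarrow> x"
proof -
  have "(\<lambda>N. (norm (x - truncate N x))\<^sup>2) \<longlonglongrightarrow> 0"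
    unfolding power2_norm_diff_truncate by (rule suminf_exist_split2) simp
  then have "(\<lambda>N. sqrt ((norm (x - truncate N x))\<^sup>2)) \<longlonglongrightarrow> sqrt 0"
    by (intro tendsto_intros)
  then have "(\<lambda>N. norm (truncate N x - x)) \<longlonglongrightarrow> 0"
    by (simp add: norm_minus_commute)
  then show ?thesis by (simp add: tendsto_norm_zero_iff LIM_zero_cancel)
qed

section \<open>Bounded complex-linear operators and adjoints\<close>

definition bounded_clinear :: "(ell2 \<Rightarrow> ell2) \<Rightarrow> bool" where
  "bounded_clinear T \<longleftrightarrow> bounded_linear T \<and> (\<forall>c x. T (cscale c x) = cscale c (T x))"

lemma bounded_clinear_bounded_linear: "bounded_clinear T \<Longrightarrow> bounded_linear T"
  by (simp add: bounded_clinear_def)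

lemma clinear_cscale: "bounded_clinear T \<Longrightarrow> T (cscale c x) = cscale c (T x)"
  by (simp add: bounded_clinear_def)

lemma clinear_add: "bounded_clinear T \<Longrightarrow> T (x + y) = T x + T y"
  by (simp add: bounded_clinear_def linear_simps)

lemma clinear_diff: "bounded_clinear T \<Longrightarrow> T (x - y) = T x - T y"
  by (simp add: bounded_clinear_def linear_simps)

lemma clinear_zero: "bounded_clinear T \<Longrightarrow> T 0 = 0"
  by (simp add: bounded_clinear_def linear_simps)

lemma clinear_sum: "bounded_clinear T \<Longrightarrow> T (sum f A) = (\<Sum>a\<in>A. T (f a))"
  by (induction A rule: infinite_finite_induct) (auto simp: clinear_add clinear_zero)

lemma bounded_clinear_pos_bounded: "bounded_clinear T \<Longrightarrow> \<exists>K>0. \<forall>x. norm (T x) \<le> norm x * K"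
  using bounded_clinear_bounded_linear bounded_linear.pos_bounded by blast

lemma bounded_clinear_tendsto:
  "bounded_clinear T \<Longrightarrow> (f \<longlongrightarrow> a) F \<Longrightarrow> ((\<lambda>n. T (f n)) \<longlongrightarrow> T a) F"
  using bounded_clinear_bounded_linear bounded_linear.tendsto by blast

lemma bounded_clinear_id: "bounded_clinear id"
  by (simp add: bounded_clinear_def bounded_linear_ident[unfolded id_def] id_def)

lemma bounded_clinear_compose: "bounded_clinear S \<Longrightarrow> bounded_clinear T \<Longrightarrow> bounded_clinear (S \<circ> T)"
  by (simp add: bounded_clinear_def comp_def bounded_linear_compose)

lemma bounded_clinearI:
  assumes "\<And>x y. T (x + y) = T x + T y" "\<And>c x. T (cscale c x) = cscale c (T x)"
    and "\<And>x. norm (T x) \<le> norm x * K"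
  shows "bounded_clinear T"
  unfolding bounded_clinear_def
  using bounded_linear_intro[OF assms(1) _ assms(3)] assms(2)
  by (metis cscale_of_real)

lemma bounded_clinear_diff:
  assumes S: "bounded_clinear S" and T: "bounded_clinear T"
  shows "bounded_clinear (\<lambda>x. S x - T x)"
  using bounded_linear_sub[OF bounded_clinear_bounded_linear[OF S] bounded_clinear_bounded_linear[OF T]]
  by (simp add: bounded_clinear_def clinear_cscale[OF S] clinear_cscale[OF T] cscale_diff_right)

text \<open>As \<open>adj\<close> in the statement, the adjoint is defined through its coordinates
  \<open>(T\<^sup>* x)\<^sub>m = \<langle>T e\<^sub>m, x\<rangle>\<close>; the next two lemmas show that these are square-summable.\<close>

definition cadjoint :: "(ell2 \<Rightarrow> ell2) \<Rightarrow> ell2 \<Rightarrow> ell2" where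
  "cadjoint T x = mk_ell2 (\<lambda>m. cinner (T (ket_ell2 m)) x)"

lemma power2_norm_sum_ket_ell2:
  assumes "finite F"
  shows "(norm (\<Sum>m\<in>F. cscale (c m) (ket_ell2 m)))\<^sup>2 = (\<Sum>m\<in>F. (cmod (c m))\<^sup>2)"
proof -
  have "vec_of (\<Sum>m\<in>F. cscale (c m) (ket_ell2 m)) n = (if n \<in> F then c n else 0)" for n
    using assms by (simp add: vec_of_ket_ell2 if_distrib sum.delta cong: if_cong)
  then have "cinner (\<Sum>m\<in>F. cscale (c m) (ket_ell2 m)) (\<Sum>m\<in>F. cscale (c m) (ket_ell2 m))
      = complex_of_real (\<Sum>m\<in>F. (cmod (c m))\<^sup>2)"
    by (simp add: cinner_sum_left cinner_cscale_left cnj_mult_self)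
  then show ?thesis by (simp only: cinner_self of_real_eq_iff)
qed

lemma sum_cmod_cinner_ket_ell2_le:
  assumes T: "bounded_clinear T" and K: "\<And>y. norm (T y) \<le> norm y * K" "K > 0"
    and "finite F"
  shows "(\<Sum>m\<in>F. (cmod (cinner (T (ket_ell2 m)) x))\<^sup>2) \<le> K\<^sup>2 * (norm x)\<^sup>2"
proof -
  define c where "c m = cinner (T (ket_ell2 m)) x" for m
  define S where "S = (\<Sum>m\<in>F. (cmod (c m))\<^sup>2)"
  define v where "v = (\<Sum>m\<in>F. cscale (c m) (ket_ell2 m))"
  have S0: "S \<ge> 0" unfolding S_def by (simp add: sum_nonneg)
  have nv: "norm v = sqrt S"
    unfolding v_def S_def using power2_norm_sum_ket_ell2[OF \<open>finite F\<close>, of c]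
    by (metis norm_ge_zero real_sqrt_unique)
  have "cinner (T v) x = complex_of_real S"
    unfolding v_def S_def
    by (simp add: clinear_sum[OF T] clinear_cscale[OF T] cinner_sum_left cinner_cscale_left c_def
        cnj_mult_self)
  then have "S = cmod (cinner (T v) x)" using S0 by simp
  also have "\<dots> \<le> norm (T v) * norm x" by (rule complex_Cauchy_Schwarz)
  also have "\<dots> \<le> norm v * K * norm x"
    using K by (simp add: mult_right_mono)
  also have "\<dots> = sqrt S * (K * norm x)" by (simp add: nv)
  finally have le: "sqrt S * sqrt S \<le> sqrt S * (K * norm x)" using S0 by simp
  have "sqrt S \<le> K * norm x"
  proof (cases "sqrt S = 0")
    case True
    then show ?thesis using K by simp
  next
    case False
    then have "sqrt S > 0" using S0 by simp
    then show ?thesis using le mult_le_cancel_left_pos by blast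
  qed
  then have "(sqrt S)\<^sup>2 \<le> (K * norm x)\<^sup>2" using S0 by (intro power_mono) auto
  then show ?thesis using S0 by (simp add: S_def c_def power_mult_distrib)
qed

lemma summable_cinner_ket_ell2:
  assumes T: "bounded_clinear T"
  shows "summable (\<lambda>m. (cmod (cinner (T (ket_ell2 m)) x))\<^sup>2)"
proof -
  obtain K where K: "K > 0" "\<And>y. norm (T y) \<le> norm y * K"
    using bounded_clinear_pos_bounded[OF T] by blast
  show ?thesis
    by (rule summableI_nonneg_bounded[where x="K\<^sup>2 * (norm x)\<^sup>2"])
       (auto intro: sum_cmod_cinner_ket_ell2_le[OF T K(2) K(1)])
qed

lemma vec_of_cadjoint: "bounded_clinear T \<Longrightarrow> vec_of (cadjoint T x) m = cinner (T (ket_ell2 m)) x"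
  unfolding cadjoint_def using summable_cinner_ket_ell2 by (simp add: mk_ell2_inverse)

lemma cinner_cadjoint_right:
  assumes T: "bounded_clinear T"
  shows "cinner y (cadjoint T x) = cinner (T y) x"
proof -
  have "cinner (T (truncate N y)) x = cinner (truncate N y) (cadjoint T x)" for N
    by (simp add: truncate_def vec_of_cadjoint[OF T] clinear_sum[OF T] clinear_cscale[OF T]
        cinner_sum_left cinner_cscale_left)
  moreover have "(\<lambda>N. cinner (T (truncate N y)) x) \<longlonglongrightarrow> cinner (T y) x"
    by (intro tendsto_intros bounded_clinear_tendsto[OF T] truncate_tendsto)
  moreover have "(\<lambda>N. cinner (truncate N y) (cadjoint T x)) \<longlonglongrightarrow> cinner y (cadjoint T x)"
    by (intro tendsto_intros truncate_tendsto)
  ultimately show ?thesis using LIMSEQ_unique by fastforce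
qed

lemma bounded_clinear_cadjoint:
  assumes T: "bounded_clinear T"
  shows "bounded_clinear (cadjoint T)"
proof -
  obtain K where K: "K > 0" "\<And>y. norm (T y) \<le> norm y * K"
    using bounded_clinear_pos_bounded[OF T] by blast
  show ?thesis
  proof (rule bounded_clinearI[where K=K])
    show "cadjoint T (x + y) = cadjoint T x + cadjoint T y" for x y
      by (rule ell2_eqI) (simp add: vec_of_cadjoint[OF T] cinner_add_right)
    show "cadjoint T (cscale c x) = cscale c (cadjoint T x)" for c x
      by (rule ell2_eqI) (simp add: vec_of_cadjoint[OF T] cinner_cscale_right)
    fix x
    have "(norm (cadjoint T x))\<^sup>2 = (\<Sum>m. (cmod (cinner (T (ket_ell2 m)) x))\<^sup>2)"
      by (simp add: power2_norm_ell2 vec_of_cadjoint[OF T])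
    also have "\<dots> \<le> (norm x * K)\<^sup>2"
      using suminf_le_const[OF summable_cinner_ket_ell2[OF T] sum_cmod_cinner_ket_ell2_le[OF T K(2) K(1)]]
      by (simp add: power_mult_distrib mult.commute)
    finally show "norm (cadjoint T x) \<le> norm x * K"
      by (rule power2_le_imp_le) (use K in auto)
  qed
qed

section \<open>Positive operators\<close>

definition pos_op :: "(ell2 \<Rightarrow> ell2) \<Rightarrow> bool" where
  "pos_op T \<longleftrightarrow> bounded_clinear T \<and> (\<forall>x. cinner x (T x) \<in> \<real> \<and> 0 \<le> Re (cinner x (T x)))"

lemma pos_op_bounded_clinear: "pos_op T \<Longrightarrow> bounded_clinear T"
  by (simp add: pos_op_def)

lemma pos_op_form_nonneg: "pos_op T \<Longrightarrow> 0 \<le> Re (cinner x (T x))"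
  by (simp add: pos_op_def)

lemma pos_op_Im_form: "pos_op T \<Longrightarrow> Im (cinner x (T x)) = 0"
  by (simp add: pos_op_def complex_is_Real_iff)

lemma pos_op_form_real: "pos_op T \<Longrightarrow> cinner x (T x) = complex_of_real (Re (cinner x (T x)))"
  by (simp add: complex_eq_iff pos_op_Im_form)

lemma pos_op_hermitian:
  assumes P: "pos_op T"
  shows "cinner (T x) y = cinner x (T y)"
proof -
  have T: "bounded_clinear T" using P by (rule pos_op_bounded_clinear)
  note real = pos_op_Im_form[OF P]
  define a where "a = cinner x (T y)"
  define b where "b = cinner y (T x)"
  \<comment> \<open>polarization: the forms at \<open>x + y\<close> and \<open>x + i y\<close> are real\<close>
  have "cinner (x + y) (T (x + y)) = cinner x (T x) + a + b + cinner y (T y)"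
    by (simp add: clinear_add[OF T] cinner_add_left cinner_add_right a_def b_def)
  then have "Im a + Im b = 0" using real[of "x + y"] real[of x] real[of y] by simp
  moreover have "cinner (x + cscale \<i> y) (T (x + cscale \<i> y))
      = cinner x (T x) + \<i> * a - \<i> * b + cinner y (T y)"
    by (simp add: clinear_add[OF T] clinear_cscale[OF T] cinner_add_left cinner_add_right
        cinner_cscale_left cinner_cscale_right a_def b_def algebra_simps)
  then have "Re a - Re b = 0" using real[of "x + cscale \<i> y"] real[of x] real[of y] by simp
  ultimately have "b = cnj a" by (simp add: complex_eq_iff)
  then show ?thesis by (simp add: a_def b_def cinner_commute[of y])
qed

lemma quadratic_nonneg_imp_le:
  fixes q r b :: real
  assumes nonneg: "\<And>t. 0 \<le> q - 2 * t * b + t\<^sup>2 * b * r" and "0 \<le> q" "0 \<le> r"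
  shows "b \<le> q * r"
proof (cases "r = 0")
  case True
  have "0 \<le> q - 2 * ((q + 1) / b) * b" if "b > 0"
    using nonneg[of "(q + 1) / b"] True by simp
  then show ?thesis using True \<open>0 \<le> q\<close> by (cases "b > 0") auto
next
  case False
  then have "r > 0" using \<open>0 \<le> r\<close> by simp
  have "0 \<le> q - 2 * (1 / r) * b + (1 / r)\<^sup>2 * b * r" by (rule nonneg)
  also have "\<dots> = q - b / r" using \<open>r > 0\<close> by (simp add: power2_eq_square field_simps)
  finally show ?thesis using \<open>r > 0\<close> by (simp add: divide_le_eq mult.commute)
qed

lemma pos_op_Cauchy_Schwarz:
  assumes P: "pos_op T"
  shows "(cmod (cinner u (T v)))\<^sup>2 \<le> Re (cinner u (T u)) * Re (cinner v (T v))"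
proof (rule quadratic_nonneg_imp_le)
  have T: "bounded_clinear T" using P by (rule pos_op_bounded_clinear)
  define a where "a = cinner u (T v)"
  fix t :: real
  define s where "s = - complex_of_real t * cnj a"
  have h: "cinner v (T u) = cnj a"
    using pos_op_hermitian[OF P, of v u] by (simp add: a_def cinner_commute[of "T v"])
  have "cinner (u + cscale s v) (T (u + cscale s v)) =
      cinner u (T u) + s * a + cnj s * cnj a + cnj s * s * cinner v (T v)"
    by (simp add: clinear_add[OF T] clinear_cscale[OF T] cinner_add_left cinner_add_right
        cinner_cscale_left cinner_cscale_right a_def h algebra_simps)
  moreover have "s * a = - complex_of_real (t * (cmod a)\<^sup>2)"
    by (simp add: s_def cnj_mult_self mult.assoc)
  moreover have "cnj s * cnj a = - complex_of_real (t * (cmod a)\<^sup>2)"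
    by (simp add: s_def mult_cnj_self mult.assoc)
  moreover have "cnj s * s = complex_of_real (t\<^sup>2 * (cmod a)\<^sup>2)"
    by (simp add: s_def power2_eq_square mult.assoc mult.left_commute[of a] mult_cnj_self)
  ultimately have "Re (cinner (u + cscale s v) (T (u + cscale s v)))
      = Re (cinner u (T u)) - 2 * t * (cmod a)\<^sup>2 + t\<^sup>2 * (cmod a)\<^sup>2 * Re (cinner v (T v))"
    by (subst pos_op_form_real[OF P, of v]) simp
  then show "0 \<le> Re (cinner u (T u)) - 2 * t * (cmod (cinner u (T v)))\<^sup>2
      + t\<^sup>2 * (cmod (cinner u (T v)))\<^sup>2 * Re (cinner v (T v))"
    using pos_op_form_nonneg[OF P, of "u + cscale s v"] by (simp add: a_def)
qed (use pos_op_form_nonneg[OF P] in auto)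

lemma pos_op_form_eq_0_imp:
  assumes P: "pos_op T" and "Re (cinner u (T u)) = 0"
  shows "T u = 0"
proof -
  have "(cmod (cinner (T u) (T u)))\<^sup>2 \<le> Re (cinner (T u) (T (T u))) * Re (cinner u (T u))"
    by (rule pos_op_Cauchy_Schwarz[OF P])
  then have "cinner (T u) (T u) = 0" using assms(2) by simp
  then show ?thesis by simp
qed

lemma pos_op_norm_le:
  assumes P: "pos_op T" and form_le: "\<And>y. Re (cinner y (T y)) \<le> M * (norm y)\<^sup>2"
  shows "norm (T x) \<le> M * norm x"
proof -
  have M: "0 \<le> M * (norm z)\<^sup>2" for z :: ell2
    using form_le[of z] pos_op_form_nonneg[OF P, of z] by linarith
  define y where "y = T x"
  show ?thesis
  proof (cases "y = 0")
    case True
    have "0 \<le> M * norm x"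
    proof (cases "x = 0")
      case False
      then have "0 < (norm x)\<^sup>2" by simp
      then have "0 \<le> M" using M[of x] by (simp add: zero_le_mult_iff)
      then show ?thesis by simp
    qed simp
    then show ?thesis using True by (simp add: y_def)
  next
    case False
    then have "0 < (norm y)\<^sup>2" by simp
    have "(norm y)\<^sup>2 \<le> cmod (cinner y (T x))"
      unfolding power2_norm_eq_cinner y_def by (rule complex_Re_le_cmod)
    then have "((norm y)\<^sup>2)\<^sup>2 \<le> (cmod (cinner y (T x)))\<^sup>2" by (intro power_mono) auto
    also have "\<dots> \<le> Re (cinner y (T y)) * Re (cinner x (T x))" by (rule pos_op_Cauchy_Schwarz[OF P])
    also have "\<dots> \<le> (M * (norm y)\<^sup>2) * (M * (norm x)\<^sup>2)"
      by (rule mult_mono[OF form_le form_le M pos_op_form_nonneg[OF P]])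
    finally have "(norm y)\<^sup>2 * (norm y)\<^sup>2 \<le> (norm y)\<^sup>2 * (M * norm x)\<^sup>2"
      by (simp add: power2_eq_square mult_ac)
    then have "(norm y)\<^sup>2 \<le> (M * norm x)\<^sup>2"
      using \<open>0 < (norm y)\<^sup>2\<close> mult_le_cancel_left_pos by blast
    moreover have "0 \<le> M" using M[of y] \<open>0 < (norm y)\<^sup>2\<close> by (simp add: zero_le_mult_iff)
    ultimately show ?thesis
      unfolding y_def using power2_le_imp_le by (metis mult_nonneg_nonneg norm_ge_zero)
  qed
qed

section \<open>Sums of rank-one operators\<close>

definition rank_one :: "ell2 \<Rightarrow> ell2 \<Rightarrow> ell2" where
  "rank_one w x = cscale (cinner w x) w"

lemma norm_rank_one_le: "norm (rank_one w x) \<le> (norm w)\<^sup>2 * norm x"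
proof -
  have "norm (rank_one w x) = cmod (cinner w x) * norm w" by (simp add: rank_one_def norm_cscale)
  also have "\<dots> \<le> (norm w * norm x) * norm w"
    by (intro mult_right_mono complex_Cauchy_Schwarz) auto
  finally show ?thesis by (simp add: power2_eq_square mult_ac)
qed

lemma rank_one_0_left [simp]: "rank_one 0 x = 0"
  by (simp add: rank_one_def)

lemma cinner_rank_one: "cinner y (rank_one w x) = cinner w x * cinner y w"
  by (simp add: rank_one_def cinner_cscale_right)

lemma cinner_rank_one_self: "cinner x (rank_one w x) = complex_of_real ((cmod (cinner w x))\<^sup>2)"
  by (simp add: cinner_rank_one cinner_commute[of x w] mult_cnj_self)

lemma bounded_clinear_rank_one: "bounded_clinear (rank_one w)"
  by (rule bounded_clinearI[where K="(norm w)\<^sup>2"])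
     (auto simp: rank_one_def cinner_add_right cscale_add_left cinner_cscale_right mult.commute,
      metis norm_rank_one_le rank_one_def mult.commute)

definition square_summable :: "('i \<Rightarrow> ell2) \<Rightarrow> bool" where
  "square_summable g \<longleftrightarrow> (\<lambda>i. (norm (g i))\<^sup>2) summable_on UNIV"

definition sum_norm_sq :: "('i \<Rightarrow> ell2) \<Rightarrow> real" where
  "sum_norm_sq g = infsum (\<lambda>i. (norm (g i))\<^sup>2) UNIV"

definition rank_one_sum :: "('i \<Rightarrow> ell2) \<Rightarrow> ell2 \<Rightarrow> ell2" where
  "rank_one_sum g x = infsum (\<lambda>i. rank_one (g i) x) UNIV"

lemma has_sum_rank_one_sum:
  assumes g: "square_summable g"
  shows "((\<lambda>i. rank_one (g i) x) has_sum rank_one_sum g x) UNIV"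
proof -
  have "(\<lambda>i. rank_one (g i) x) abs_summable_on UNIV"
  proof (rule summable_on_comparison_test)
    show "(\<lambda>i. (norm (g i))\<^sup>2 * norm x) summable_on UNIV"
      using g unfolding square_summable_def by (rule summable_on_cmult_left)
  qed (auto simp: norm_rank_one_le)
  then show ?thesis
    unfolding rank_one_sum_def by (rule has_sum_infsum[OF abs_summable_summable])
qed

lemma norm_rank_one_sum_le:
  assumes g: "square_summable g"
  shows "norm (rank_one_sum g x) \<le> sum_norm_sq g * norm x"
proof -
  have "((\<lambda>i. (norm (g i))\<^sup>2 * norm x) has_sum sum_norm_sq g * norm x) UNIV"
    using g unfolding square_summable_def sum_norm_sq_def
    by (intro has_sum_cmult_left has_sum_infsum)
  then show ?thesis by (rule norm_infsum_le[OF has_sum_rank_one_sum[OF g]]) (simp add: norm_rank_one_le)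
qed

lemma summable_on_cmod_cinner_sq:
  assumes g: "square_summable g"
  shows "(\<lambda>i. (cmod (cinner (g i) x))\<^sup>2) summable_on UNIV"
proof (rule summable_on_comparison_test)
  show "(\<lambda>i. (norm (g i))\<^sup>2 * (norm x)\<^sup>2) summable_on UNIV"
    using g unfolding square_summable_def by (rule summable_on_cmult_left)
  fix i
  have "(cmod (cinner (g i) x))\<^sup>2 \<le> (norm (g i) * norm x)\<^sup>2"
    using complex_Cauchy_Schwarz[of "g i" x] by (intro power_mono) auto
  then show "(cmod (cinner (g i) x))\<^sup>2 \<le> (norm (g i))\<^sup>2 * (norm x)\<^sup>2"
    by (simp add: power_mult_distrib)
qed auto

lemma cinner_rank_one_sum_self:
  assumes g: "square_summable g"
  shows "cinner x (rank_one_sum g x) = complex_of_real (infsum (\<lambda>i. (cmod (cinner (g i) x))\<^sup>2) UNIV)"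
proof -
  have "((\<lambda>i. cinner x (rank_one (g i) x)) has_sum cinner x (rank_one_sum g x)) UNIV"
    by (intro has_sum_bounded_linear[OF bounded_linear_cinner_right] has_sum_rank_one_sum g)
  moreover have "((\<lambda>i. complex_of_real ((cmod (cinner (g i) x))\<^sup>2)) has_sum
      complex_of_real (infsum (\<lambda>i. (cmod (cinner (g i) x))\<^sup>2) UNIV)) UNIV"
    by (intro has_sum_bounded_linear[OF bounded_linear_of_real] has_sum_infsum
        summable_on_cmod_cinner_sq g)
  ultimately show ?thesis by (simp add: cinner_rank_one_self has_sum_unique)
qed

lemma rank_one_sum_eq_0:
  assumes g: "square_summable g" and orth: "\<And>i. cinner (g i) x = 0"
  shows "rank_one_sum g x = 0"
  using has_sum_rank_one_sum[OF g, of x] by (simp add: rank_one_def orth has_sum_0 has_sum_unique)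

lemma vec_of_rank_one_sum_eq_0:
  assumes g: "square_summable g" and "\<And>i. vec_of (g i) n = 0"
  shows "vec_of (rank_one_sum g x) n = 0"
proof -
  have "((\<lambda>i. cinner (ket_ell2 n) (rank_one (g i) x)) has_sum cinner (ket_ell2 n) (rank_one_sum g x)) UNIV"
    by (intro has_sum_bounded_linear[OF bounded_linear_cinner_right] has_sum_rank_one_sum g)
  then show ?thesis using assms(2) by (simp add: rank_one_def has_sum_0 has_sum_unique)
qed

section \<open>Rank-one decomposition of positive trace-class operators\<close>

text \<open>A Cholesky-type elimination along the basis: \<open>pivot R k\<close> is the rank-one part of \<open>R\<close>
  through \<open>e\<^sub>k\<close>, normalised so that \<open>R - |w\<rangle>\<langle>w|\<close> stays positive and kills \<open>e\<^sub>k\<close>.\<close>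

definition pivot :: "(ell2 \<Rightarrow> ell2) \<Rightarrow> nat \<Rightarrow> ell2" where
  "pivot R k = (let d = Re (vec_of (R (ket_ell2 k)) k)
     in if d > 0 then cscale (complex_of_real (1 / sqrt d)) (R (ket_ell2 k)) else 0)"

primrec residual :: "(ell2 \<Rightarrow> ell2) \<Rightarrow> nat \<Rightarrow> ell2 \<Rightarrow> ell2" where
  "residual T 0 = T"
| "residual T (Suc k) = (\<lambda>x. residual T k x - rank_one (pivot (residual T k) k) x)"

definition pivots :: "(ell2 \<Rightarrow> ell2) \<Rightarrow> nat \<Rightarrow> ell2" where
  "pivots T k = pivot (residual T k) k"

lemma residual_eq: "residual T k x = T x - (\<Sum>j<k. rank_one (pivots T j) x)"
  by (induction k) (auto simp: pivots_def)

lemma cmod_cinner_pivot_le: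
  assumes P: "pos_op R"
  shows "(cmod (cinner (pivot R k) x))\<^sup>2 \<le> Re (cinner x (R x))"
proof -
  define d where "d = Re (vec_of (R (ket_ell2 k)) k)"
  show ?thesis
  proof (cases "d > 0")
    case True
    then have "pivot R k = cscale (complex_of_real (1 / sqrt d)) (R (ket_ell2 k))"
      by (simp add: pivot_def d_def)
    moreover have "cinner (R (ket_ell2 k)) x = cinner (ket_ell2 k) (R x)"
      by (rule pos_op_hermitian[OF P])
    ultimately have "(cmod (cinner (pivot R k) x))\<^sup>2 = (cmod (cinner (ket_ell2 k) (R x)))\<^sup>2 / d"
      using True by (simp add: cinner_cscale_left norm_divide power_divide del: cinner_ket_ell2_left)
    also have "\<dots> \<le> Re (cinner x (R x))"
      using pos_op_Cauchy_Schwarz[OF P, of "ket_ell2 k" x] True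
      by (simp add: d_def pos_divide_le_eq mult.commute)
    finally show ?thesis .
  next
    case False
    then show ?thesis by (simp add: pivot_def d_def[symmetric] pos_op_form_nonneg[OF P])
  qed
qed

lemma rank_one_pivot_ket:
  assumes P: "pos_op R"
  shows "rank_one (pivot R k) (ket_ell2 k) = R (ket_ell2 k)"
proof -
  define d where "d = Re (vec_of (R (ket_ell2 k)) k)"
  show ?thesis
  proof (cases "d > 0")
    case True
    have "vec_of (R (ket_ell2 k)) k = complex_of_real d"
      using pos_op_form_real[OF P, of "ket_ell2 k"] by (simp add: d_def)
    then have "cinner (R (ket_ell2 k)) (ket_ell2 k) = complex_of_real d" by simp
    moreover have "pivot R k = cscale (complex_of_real (1 / sqrt d)) (R (ket_ell2 k))"
      using True by (simp add: pivot_def d_def)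
    ultimately show ?thesis
      using True by (simp add: rank_one_def cinner_cscale_left flip: of_real_mult
          del: cinner_ket_ell2_right)
  next
    case False
    then have "Re (cinner (ket_ell2 k) (R (ket_ell2 k))) = 0"
      using pos_op_form_nonneg[OF P, of "ket_ell2 k"] by (simp add: d_def)
    then show ?thesis
      using False pos_op_form_eq_0_imp[OF P] by (simp add: pivot_def d_def rank_one_def)
  qed
qed

lemma cinner_pivot_eq_0:
  assumes P: "pos_op R" and "R (ket_ell2 m) = 0"
  shows "cinner (pivot R k) (ket_ell2 m) = 0"
proof -
  have "cinner (R (ket_ell2 k)) (ket_ell2 m) = 0"
    using assms by (simp add: pos_op_hermitian[OF P] del: cinner_ket_ell2_right)
  then show ?thesis by (simp add: pivot_def Let_def cinner_cscale_left del: cinner_ket_ell2_right)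
qed

lemma pos_op_diff_rank_one:
  assumes P: "pos_op R" and small: "\<And>x. (cmod (cinner w x))\<^sup>2 \<le> Re (cinner x (R x))"
  shows "pos_op (\<lambda>x. R x - rank_one w x)"
  unfolding pos_op_def
proof (intro conjI allI)
  show "bounded_clinear (\<lambda>x. R x - rank_one w x)"
    by (rule bounded_clinear_diff[OF pos_op_bounded_clinear[OF P] bounded_clinear_rank_one])
  fix x
  have form: "cinner x (R x - rank_one w x)
      = complex_of_real (Re (cinner x (R x)) - (cmod (cinner w x))\<^sup>2)"
    by (simp add: complex_eq_iff cinner_diff_right cinner_rank_one_self pos_op_Im_form[OF P])
  show "cinner x (R x - rank_one w x) \<in> \<real>" unfolding form by simp
  show "0 \<le> Re (cinner x (R x - rank_one w x))" unfolding form using small[of x] by simp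
qed

lemma residual_properties:
  assumes P: "pos_op T"
  shows "pos_op (residual T k) \<and> (\<forall>m<k. residual T k (ket_ell2 m) = 0)
      \<and> (\<forall>x. Re (cinner x (residual T k x)) \<le> Re (cinner x (T x)))"
proof (induction k)
  case 0
  then show ?case using P by simp
next
  case (Suc k)
  define R where "R = residual T k"
  have PR: "pos_op R" and kill: "\<And>m. m < k \<Longrightarrow> R (ket_ell2 m) = 0"
    and le: "\<And>x. Re (cinner x (R x)) \<le> Re (cinner x (T x))"
    using Suc by (auto simp: R_def)
  have "pos_op (\<lambda>x. R x - rank_one (pivot R k) x)"
    by (rule pos_op_diff_rank_one[OF PR cmod_cinner_pivot_le[OF PR]])
  moreover have "R (ket_ell2 m) - rank_one (pivot R k) (ket_ell2 m) = 0" if "m < Suc k" for m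
  proof (cases "m = k")
    case True
    then show ?thesis by (simp add: rank_one_pivot_ket[OF PR])
  next
    case False
    then show ?thesis
      using that kill cinner_pivot_eq_0[OF PR] by (simp add: rank_one_def)
  qed
  moreover have "Re (cinner x (R x - rank_one (pivot R k) x)) \<le> Re (cinner x (T x))" for x
  proof -
    have "Re (cinner x (R x - rank_one (pivot R k) x))
        = Re (cinner x (R x)) - (cmod (cinner (pivot R k) x))\<^sup>2"
      by (simp add: cinner_diff_right cinner_rank_one_self)
    then show ?thesis using le[of x] zero_le_power2[of "cmod (cinner (pivot R k) x)"] by linarith
  qed
  ultimately show ?case by (simp add: R_def)
qed

lemma residual_tendsto_0:
  assumes P: "pos_op T"
  shows "(\<lambda>k. residual T k x) \<longlonglongrightarrow> 0"
proof -
  obtain K where K: "K > 0" "\<And>y. norm (T y) \<le> norm y * K"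
    using bounded_clinear_pos_bounded[OF pos_op_bounded_clinear[OF P]] by blast
  have form_le: "Re (cinner y (residual T k y)) \<le> K * (norm y)\<^sup>2" for k y
  proof -
    have "Re (cinner y (residual T k y)) \<le> Re (cinner y (T y))"
      using residual_properties[OF P, of k] by blast
    also have "\<dots> \<le> cmod (cinner y (T y))" by (rule complex_Re_le_cmod)
    also have "\<dots> \<le> norm y * norm (T y)" by (rule complex_Cauchy_Schwarz)
    also have "\<dots> \<le> norm y * (norm y * K)" by (rule mult_left_mono[OF K(2) norm_ge_zero])
    finally show ?thesis by (simp add: power2_eq_square mult_ac)
  qed
  \<comment> \<open>\<open>residual T k\<close> kills \<open>e\<^sub>0, \<dots>, e\<^sub>k\<^sub>-\<^sub>1\<close>, so it only sees the tail \<open>x - truncate k x\<close>\<close>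
  have bound: "norm (residual T k x) \<le> K * norm (x - truncate k x)" for k
  proof -
    have R: "pos_op (residual T k)" and kill: "\<And>m. m < k \<Longrightarrow> residual T k (ket_ell2 m) = 0"
      using residual_properties[OF P, of k] by blast+
    note R' = pos_op_bounded_clinear[OF R]
    have "residual T k (truncate k x) = 0"
      by (simp add: truncate_def clinear_sum[OF R'] clinear_cscale[OF R'] kill)
    then have "residual T k x = residual T k (x - truncate k x)" by (simp add: clinear_diff[OF R'])
    also have "norm \<dots> \<le> K * norm (x - truncate k x)" by (rule pos_op_norm_le[OF R form_le])
    finally show ?thesis .
  qed
  have "(\<lambda>k. norm (truncate k x - x)) \<longlonglongrightarrow> 0"
    using truncate_tendsto[of x] by (simp add: tendsto_norm_zero_iff LIM_zero)
  then have "(\<lambda>k. K * norm (x - truncate k x)) \<longlonglongrightarrow> 0"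
    using tendsto_mult_right_zero[of _ _ K] by (simp add: norm_minus_commute)
  then show ?thesis
  proof (rule tendsto_0_le[where K=1])
    show "\<forall>\<^sub>F k in sequentially. norm (residual T k x) \<le> norm (K * norm (x - truncate k x)) * 1"
      using bound K(1) by (intro always_eventually allI) (simp add: abs_of_pos)
  qed
qed

lemma sum_pivots_coord_le:
  assumes P: "pos_op T"
  shows "(\<Sum>j<k. (cmod (vec_of (pivots T j) m))\<^sup>2) \<le> Re (cinner (ket_ell2 m) (T (ket_ell2 m)))"
proof -
  have "0 \<le> Re (cinner (ket_ell2 m) (residual T k (ket_ell2 m)))"
    using residual_properties[OF P, of k] pos_op_form_nonneg by blast
  then show ?thesis
    by (simp add: residual_eq cinner_diff_right cinner_sum_right cinner_rank_one_self)
qed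

lemma square_summable_pivots:
  assumes P: "pos_op T" and trace: "summable (\<lambda>m. Re (cinner (ket_ell2 m) (T (ket_ell2 m))))"
  shows "square_summable (pivots T)"
  unfolding square_summable_def
proof (rule nonneg_bdd_above_summable_on)
  show "bdd_above (sum (\<lambda>j. (norm (pivots T j))\<^sup>2) ` {F. F \<subseteq> UNIV \<and> finite F})"
  proof (rule bdd_aboveI2)
    fix F :: "nat set" assume "F \<in> {F. F \<subseteq> UNIV \<and> finite F}"
    then obtain k where k: "F \<subseteq> {..<k}"
      using finite_nat_iff_bounded by auto
    have "(\<Sum>j\<in>F. (norm (pivots T j))\<^sup>2) \<le> (\<Sum>j<k. (norm (pivots T j))\<^sup>2)"
      by (rule sum_mono2) (use k in auto)
    also have "\<dots> = (\<Sum>m. \<Sum>j<k. (cmod (vec_of (pivots T j) m))\<^sup>2)"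
      unfolding power2_norm_ell2 by (rule suminf_sum[symmetric]) simp
    also have "\<dots> \<le> (\<Sum>m. Re (cinner (ket_ell2 m) (T (ket_ell2 m))))"
    proof (rule suminf_le[OF _ _ trace])
      show "summable (\<lambda>m. \<Sum>j<k. (cmod (vec_of (pivots T j) m))\<^sup>2)"
        by (intro summable_sum) simp
    qed (rule sum_pivots_coord_le[OF P])
    finally show "(\<Sum>j\<in>F. (norm (pivots T j))\<^sup>2) \<le> (\<Sum>m. Re (cinner (ket_ell2 m) (T (ket_ell2 m))))" .
  qed
qed auto

theorem pos_op_eq_rank_one_sum:
  assumes P: "pos_op T" and trace: "summable (\<lambda>m. Re (cinner (ket_ell2 m) (T (ket_ell2 m))))"
  shows "T x = rank_one_sum (pivots T) x"
proof -
  have "(\<lambda>k. T x - residual T k x) \<longlonglongrightarrow> T x - 0"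
    by (intro tendsto_intros residual_tendsto_0[OF P])
  then have "(\<lambda>j. rank_one (pivots T j) x) sums T x" by (simp add: residual_eq sums_def)
  moreover have "(\<lambda>j. rank_one (pivots T j) x) sums rank_one_sum (pivots T) x"
    by (rule has_sum_imp_sums[OF has_sum_rank_one_sum[OF square_summable_pivots[OF P trace]]])
  ultimately show ?thesis by (rule sums_unique2)
qed

lemma vec_of_pivots_eq_0:
  assumes "\<And>x. vec_of (T x) n = 0"
  shows "vec_of (pivots T k) n = 0"
proof -
  have "vec_of (residual T k x) n = 0" for x
  proof (induction k arbitrary: x)
    case 0
    then show ?case using assms by simp
  next
    case (Suc k)
    then have "vec_of (pivot (residual T k) k) n = 0" by (simp add: pivot_def Let_def)
    then show ?case using Suc by (simp add: rank_one_def)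
  qed
  then show ?thesis by (simp add: pivots_def pivot_def Let_def)
qed

section \<open>Orthogonal vectors to a subspace\<close>

lemma parallelogram_law:
  fixes u v :: "'a::real_inner"
  shows "(norm (u + v))\<^sup>2 + (norm (u - v))\<^sup>2 = 2 * (norm u)\<^sup>2 + 2 * (norm v)\<^sup>2"
  by (simp add: power2_norm_eq_inner inner_add_left inner_add_right inner_diff_left inner_diff_right
      inner_commute)

lemma power2_norm_diff_scaleR:
  fixes w s :: "'a::real_inner"
  shows "(norm (w - t *\<^sub>R s))\<^sup>2 = (norm w)\<^sup>2 - 2 * t * inner w s + t\<^sup>2 * (norm s)\<^sup>2"
  unfolding power2_norm_eq_inner
  by (simp add: inner_diff_left inner_diff_right inner_commute power2_eq_square algebra_simps)

lemma linear_le_quadratic_imp_eq_0: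
  fixes a b :: real
  assumes le: "\<And>t. 2 * t * a \<le> t\<^sup>2 * b" and "0 \<le> b"
  shows "a = 0"
proof -
  define c where "c = b + 1"
  have "c > 0" using \<open>0 \<le> b\<close> by (simp add: c_def)
  have "c\<^sup>2 * (2 * (a / c) * a) \<le> c\<^sup>2 * ((a / c)\<^sup>2 * b)" by (rule mult_left_mono[OF le]) simp
  then have "2 * a\<^sup>2 * c \<le> a\<^sup>2 * b" using \<open>c > 0\<close> by (simp add: power2_eq_square field_simps)
  then have "a\<^sup>2 * (b + 2) \<le> 0" by (simp add: c_def algebra_simps)
  then show ?thesis using \<open>0 \<le> b\<close> by (smt (verit) mult_pos_pos zero_less_power2)
qed

lemma exists_near_minimiser:
  fixes S :: "'a::real_normed_vector set"
  assumes "S \<noteq> {}" "e > 0"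
  shows "\<exists>s\<in>S. (dist y s)\<^sup>2 < (infdist y S)\<^sup>2 + e"
proof -
  have "infdist y S < sqrt ((infdist y S)\<^sup>2 + e)"
    using assms(2) infdist_nonneg[of y S] by (simp add: real_less_rsqrt)
  then obtain s where "s \<in> S" "dist y s < sqrt ((infdist y S)\<^sup>2 + e)"
    using cINF_less_iff[of S "dist y"] assms(1) by (auto simp: infdist_notempty)
  then have "(dist y s)\<^sup>2 < (sqrt ((infdist y S)\<^sup>2 + e))\<^sup>2" by (intro power_strict_mono) auto
  then show ?thesis using \<open>s \<in> S\<close> assms(2) by auto
qed

lemma norm_diff_near_minimisers_le:
  fixes S :: "'a::real_inner set"
  assumes S: "subspace S" and "s \<in> S" "t \<in> S"
    and "(dist y s)\<^sup>2 \<le> (infdist y S)\<^sup>2 + a" "(dist y t)\<^sup>2 \<le> (infdist y S)\<^sup>2 + b"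
  shows "(norm (s - t))\<^sup>2 \<le> 2 * a + 2 * b"
proof -
  define u where "u = y - s"
  define v where "v = y - t"
  have "(1/2) *\<^sub>R (s + t) \<in> S" using assms by (intro subspace_scale subspace_add)
  then have "infdist y S \<le> norm (y - (1/2) *\<^sub>R (s + t))" by (metis infdist_le dist_norm)
  moreover have "u + v = 2 *\<^sub>R (y - (1/2) *\<^sub>R (s + t))"
    by (simp add: u_def v_def algebra_simps scaleR_2)
  ultimately have "4 * (infdist y S)\<^sup>2 \<le> (norm (u + v))\<^sup>2"
    using infdist_nonneg[of y S] by (simp add: power_mult_distrib power_mono)
  then have "(norm (u - v))\<^sup>2 \<le> 2 * a + 2 * b"
    using parallelogram_law[of u v] assms(4,5) by (simp add: u_def v_def dist_norm)
  then show ?thesis by (simp add: u_def v_def norm_minus_commute)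
qed

lemma Cauchy_near_minimisers:
  fixes S :: "'a::real_inner set"
  assumes S: "subspace S" and s: "\<And>k. s k \<in> S"
    and near: "\<And>k. (dist y (s k))\<^sup>2 \<le> (infdist y S)\<^sup>2 + 1 / Suc k"
  shows "Cauchy s"
proof (rule metric_CauchyI)
  fix e :: real assume "e > 0"
  obtain N :: nat where N: "4 / e\<^sup>2 < N" using reals_Archimedean2 by blast
  have "dist (s i) (s j) < e" if "N \<le> i" "N \<le> j" for i j
  proof -
    have "(norm (s i - s j))\<^sup>2 \<le> 2 * (1 / Suc i) + 2 * (1 / Suc j)"
      by (rule norm_diff_near_minimisers_le[OF S s s near near])
    also have "\<dots> \<le> 4 / Suc N"
      using that divide_left_mono[of "real (Suc N)" "real (Suc i)" 1]
        divide_left_mono[of "real (Suc N)" "real (Suc j)" 1] by simp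
    also have "\<dots> < e\<^sup>2"
    proof -
      have "4 < real N * e\<^sup>2" using N \<open>e > 0\<close> by (simp add: divide_less_eq)
      moreover have "0 < e\<^sup>2" using \<open>e > 0\<close> by simp
      moreover have "real (Suc N) * e\<^sup>2 = e\<^sup>2 + real N * e\<^sup>2" by (simp add: algebra_simps)
      ultimately have "4 < e\<^sup>2 * real (Suc N)" by (simp only: mult.commute)
      then show ?thesis by (simp only: pos_divide_less_eq[OF of_nat_0_less_iff[THEN iffD2, OF zero_less_Suc]])
    qed
    finally show ?thesis using \<open>e > 0\<close> by (simp add: dist_norm power_less_imp_less_base)
  qed
  then show "\<exists>M. \<forall>i\<ge>M. \<forall>j\<ge>M. dist (s i) (s j) < e" by blast
qed

lemma orthogonal_if_minimal_on_lines:
  fixes w z :: "'a::real_inner"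
  assumes "\<And>t. norm w \<le> norm (w - t *\<^sub>R z)"
  shows "inner w z = 0"
proof (rule linear_le_quadratic_imp_eq_0)
  fix t
  have "(norm w)\<^sup>2 \<le> (norm (w - t *\<^sub>R z))\<^sup>2" using assms[of t] by (simp add: power_mono)
  then show "2 * t * inner w z \<le> t\<^sup>2 * (norm z)\<^sup>2" by (simp add: power2_norm_diff_scaleR)
qed simp

text \<open>Hilbert's projection theorem, in the form needed: a minimising sequence in \<open>S\<close> for the
  distance to \<open>y\<close> converges, and its limit \<open>p\<close> also minimises the distance along every line
  \<open>p + t z\<close>, \<open>z \<in> S\<close>.\<close>

lemma exists_orthogonal_not_in_closure:
  fixes S :: "'a::{real_inner, complete_space} set"
  assumes S: "subspace S" and y: "y \<notin> closure S"
  shows "\<exists>p\<in>closure S. y - p \<noteq> 0 \<and> (\<forall>z\<in>S. inner (y - p) z = 0)"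
proof -
  have "S \<noteq> {}" using subspace_0[OF S] by blast
  define d where "d = infdist y S"
  have "d > 0"
    using y in_closure_iff_infdist_zero[OF \<open>S \<noteq> {}\<close>] infdist_nonneg[of y S] by (simp add: d_def)
  have "\<exists>s. s \<in> S \<and> (dist y s)\<^sup>2 < d\<^sup>2 + 1 / Suc k" for k
    unfolding d_def using exists_near_minimiser[OF \<open>S \<noteq> {}\<close>, of "1 / Suc k" y] by auto
  then obtain s where s: "\<And>k. s k \<in> S" and near: "\<And>k. (dist y (s k))\<^sup>2 < d\<^sup>2 + 1 / Suc k"
    by metis
  have "Cauchy s"
    using near unfolding d_def by (intro Cauchy_near_minimisers[OF S s, of y] less_imp_le)
  then obtain p where p: "s \<longlonglongrightarrow> p" using Cauchy_convergent_iff convergent_def by blast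
  have "p \<in> closure S" using s p by (auto simp: closure_sequential)
  have line: "d \<le> norm (y - p - t *\<^sub>R z)" if "z \<in> S" for z t
  proof (rule LIMSEQ_le_const)
    show "(\<lambda>k. norm (y - (s k + t *\<^sub>R z))) \<longlonglongrightarrow> norm (y - p - t *\<^sub>R z)"
      using p by (auto intro!: tendsto_intros simp: algebra_simps)
    have "d \<le> norm (y - (s k + t *\<^sub>R z))" for k
    proof -
      have "s k + t *\<^sub>R z \<in> S" using S s that by (intro subspace_add subspace_scale)
      then show ?thesis unfolding d_def dist_norm[symmetric] by (rule infdist_le)
    qed
    then show "\<exists>N. \<forall>k\<ge>N. d \<le> norm (y - (s k + t *\<^sub>R z))" by blast
  qed
  have "(norm (y - p))\<^sup>2 \<le> d\<^sup>2"
  proof (rule LIMSEQ_le)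
    show "(\<lambda>k. (dist y (s k))\<^sup>2) \<longlonglongrightarrow> (norm (y - p))\<^sup>2"
      using p by (auto intro!: tendsto_intros simp: dist_norm)
    show "(\<lambda>k. d\<^sup>2 + 1 / Suc k) \<longlonglongrightarrow> d\<^sup>2"
      using tendsto_add[OF tendsto_const LIMSEQ_inverse_real_of_nat] by (simp add: inverse_eq_divide)
    show "\<exists>N. \<forall>k\<ge>N. (dist y (s k))\<^sup>2 \<le> d\<^sup>2 + 1 / Suc k" using near less_imp_le by blast
  qed
  then have "norm (y - p) \<le> d" by (rule power2_le_imp_le[OF _ less_imp_le[OF \<open>d > 0\<close>]])
  have "inner (y - p) z = 0" if "z \<in> S" for z
  proof (rule orthogonal_if_minimal_on_lines)
    show "norm (y - p) \<le> norm (y - p - t *\<^sub>R z)" for t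
      using \<open>norm (y - p) \<le> d\<close> line[OF that, of t] by linarith
  qed
  moreover have "y - p \<noteq> 0" using line[OF subspace_0[OF S], of 0] \<open>d > 0\<close> by auto
  ultimately show ?thesis using \<open>p \<in> closure S\<close> by blast
qed

section \<open>Kraus maps on sums of rank-one operators\<close>

text \<open>With \<open>B = \<Sum>\<^sub>j |g\<^sub>j\<rangle>\<langle>g\<^sub>j|\<close>, the Kraus map gives \<open>\<Sum>\<^sub>i A\<^sub>i B A\<^sub>i\<^sup>* = \<Sum>\<^sub>i\<^sub>,\<^sub>j |A\<^sub>i g\<^sub>j\<rangle>\<langle>A\<^sub>i g\<^sub>j|\<close>, and the
  Kraus bound \<open>\<Sum> A\<^sub>i\<^sup>* A\<^sub>i \<le> c\<close> controls \<open>\<Sum>\<^sub>i\<^sub>,\<^sub>j \<parallel>A\<^sub>i g\<^sub>j\<parallel>\<^sup>2 \<le> c \<Sum>\<^sub>j \<parallel>g\<^sub>j\<parallel>\<^sup>2\<close>.  Iterating, families are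
  indexed by words \<open>i\<^sub>1 \<dots> i\<^sub>k\<close> of Kraus indices together with an initial index.\<close>

locale kraus_family =
  fixes A :: "nat \<Rightarrow> ell2 \<Rightarrow> ell2" and c :: real
  assumes bounded_clinear_A: "\<And>i. bounded_clinear (A i)"
    and kraus_sum_bound: "\<And>F v. finite F \<Longrightarrow> (\<Sum>i\<in>F. (norm (A i v))\<^sup>2) \<le> c * (norm v)\<^sup>2"
begin

lemma c_nonneg: "c \<ge> 0"
  using kraus_sum_bound[of "{}" "ket_ell2 0"] by simp

lemma sum_norm_sq_pairs_le:
  assumes g: "square_summable g" and "finite Q"
  shows "(\<Sum>q\<in>Q. (norm (A (fst q) (g (snd q))))\<^sup>2) \<le> c * sum_norm_sq g"
proof -
  have "(\<Sum>q\<in>Q. (norm (A (fst q) (g (snd q))))\<^sup>2)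
      \<le> (\<Sum>q\<in>fst ` Q \<times> snd ` Q. (norm (A (fst q) (g (snd q))))\<^sup>2)"
    by (rule sum_mono2) (use \<open>finite Q\<close> in \<open>auto simp: finite_cartesian_product intro: rev_image_eqI\<close>)
  also have "\<dots> = (\<Sum>i\<in>fst ` Q. \<Sum>j\<in>snd ` Q. (norm (A i (g j)))\<^sup>2)"
    by (subst sum.cartesian_product) (simp add: case_prod_unfold)
  also have "\<dots> = (\<Sum>j\<in>snd ` Q. \<Sum>i\<in>fst ` Q. (norm (A i (g j)))\<^sup>2)"
    by (rule sum.swap)
  also have "\<dots> \<le> (\<Sum>j\<in>snd ` Q. c * (norm (g j))\<^sup>2)"
    by (rule sum_mono) (rule kraus_sum_bound, use \<open>finite Q\<close> in auto)
  also have "\<dots> = c * (\<Sum>j\<in>snd ` Q. (norm (g j))\<^sup>2)" by (simp add: sum_distrib_left)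
  also have "\<dots> \<le> c * sum_norm_sq g"
    using g c_nonneg unfolding square_summable_def sum_norm_sq_def
    by (intro mult_left_mono finite_sum_le_infsum) (use \<open>finite Q\<close> in auto)
  finally show ?thesis .
qed

lemma square_summable_pairs:
  assumes g: "square_summable g"
  shows "square_summable (\<lambda>(i, j). A i (g j))"
  unfolding square_summable_def
proof (rule nonneg_bdd_above_summable_on)
  show "bdd_above (sum (\<lambda>q. (norm (case q of (i, j) \<Rightarrow> A i (g j)))\<^sup>2) ` {F. F \<subseteq> UNIV \<and> finite F})"
    using sum_norm_sq_pairs_le[OF g] by (intro bdd_aboveI2) (auto simp: case_prod_unfold)
qed auto

lemma tendsto_kraus_rank_one_sum:
  assumes g: "square_summable g"
  shows "(\<lambda>N. \<Sum>i<N. A i (rank_one_sum g (cadjoint (A i) x)))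
    \<longlonglongrightarrow> rank_one_sum (\<lambda>(i, j). A i (g j)) x"
proof -
  have inner: "((\<lambda>j. rank_one (A i (g j)) x) has_sum A i (rank_one_sum g (cadjoint (A i) x))) UNIV" for i
  proof -
    have "((\<lambda>j. A i (rank_one (g j) (cadjoint (A i) x))) has_sum A i (rank_one_sum g (cadjoint (A i) x))) UNIV"
      by (intro has_sum_bounded_linear[OF bounded_clinear_bounded_linear[OF bounded_clinear_A]]
          has_sum_rank_one_sum g)
    moreover have "A i (rank_one (g j) (cadjoint (A i) x)) = rank_one (A i (g j)) x" for j
      by (simp add: rank_one_def clinear_cscale[OF bounded_clinear_A] cinner_cadjoint_right[OF bounded_clinear_A])
    ultimately show ?thesis by simp
  qed
  have "((\<lambda>(i, j). rank_one (A i (g j)) x) has_sum rank_one_sum (\<lambda>(i, j). A i (g j)) x) (UNIV \<times> UNIV)"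
    using has_sum_rank_one_sum[OF square_summable_pairs[OF g], of x]
    by (simp add: case_prod_unfold)
  then have "((\<lambda>i. A i (rank_one_sum g (cadjoint (A i) x))) has_sum rank_one_sum (\<lambda>(i, j). A i (g j)) x) UNIV"
    by (rule has_sum_Sigma'[where f="\<lambda>(i, j). rank_one (A i (g j)) x"]) (use inner in simp)
  then show ?thesis by (simp add: sums_def[symmetric] has_sum_imp_sums)
qed

definition kraus_step :: "(nat list \<times> 'b \<Rightarrow> ell2) \<Rightarrow> nat list \<times> 'b \<Rightarrow> ell2" where
  "kraus_step g p = (case fst p of [] \<Rightarrow> 0 | i # ws \<Rightarrow> A i (g (ws, snd p)))"

definition cons_index :: "nat \<times> (nat list \<times> 'b) \<Rightarrow> nat list \<times> 'b" where
  "cons_index q = (fst q # fst (snd q), snd (snd q))"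

lemma inj_cons_index: "inj cons_index"
  by (auto simp: inj_def cons_index_def prod_eq_iff)

lemma kraus_step_cons_index: "kraus_step g (cons_index q) = A (fst q) (g (snd q))"
  by (simp add: kraus_step_def cons_index_def)

lemma kraus_step_not_cons_index: "p \<notin> range cons_index \<Longrightarrow> kraus_step g p = 0"
  by (cases p; cases "fst p") (auto simp: kraus_step_def cons_index_def image_iff)

lemma square_summable_kraus_step:
  assumes g: "square_summable g"
  shows "square_summable (kraus_step g)"
proof -
  have "((\<lambda>p. (norm (kraus_step g p))\<^sup>2) \<circ> cons_index) summable_on UNIV"
    using square_summable_pairs[OF g]
    by (simp add: square_summable_def comp_def kraus_step_cons_index case_prod_beta)
  then have "(\<lambda>p. (norm (kraus_step g p))\<^sup>2) summable_on range cons_index"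
    using summable_on_reindex[OF inj_on_subset[OF inj_cons_index], of UNIV] by auto
  then show ?thesis unfolding square_summable_def
    by (rule summable_on_cong_neutral[THEN iffD1, rotated -1]) (auto simp: kraus_step_not_cons_index)
qed

lemma rank_one_sum_kraus_step:
  assumes g: "square_summable g"
  shows "rank_one_sum (kraus_step g) x = rank_one_sum (\<lambda>(i, p). A i (g p)) x"
proof -
  have "((\<lambda>p. rank_one (kraus_step g p) x) has_sum rank_one_sum (kraus_step g) x) (range cons_index)"
    using has_sum_rank_one_sum[OF square_summable_kraus_step[OF g]]
    by (rule has_sum_cong_neutral[THEN iffD1, rotated -1]) (auto simp: kraus_step_not_cons_index)
  then have "(((\<lambda>p. rank_one (kraus_step g p) x) \<circ> cons_index) has_sum rank_one_sum (kraus_step g) x) UNIV"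
    using has_sum_reindex[OF inj_on_subset[OF inj_cons_index], of UNIV] by auto
  then have "((\<lambda>q. rank_one ((\<lambda>(i, p). A i (g p)) q) x) has_sum rank_one_sum (kraus_step g) x) UNIV"
    by (simp add: comp_def kraus_step_cons_index case_prod_unfold)
  then show ?thesis
    using has_sum_rank_one_sum[OF square_summable_pairs[OF g]] has_sum_unique by blast
qed

lemma tendsto_kraus_step:
  assumes g: "square_summable g"
  shows "(\<lambda>N. \<Sum>i<N. A i (rank_one_sum g (cadjoint (A i) x))) \<longlonglongrightarrow> rank_one_sum (kraus_step g) x"
  using tendsto_kraus_rank_one_sum[OF g, of x] by (simp add: rank_one_sum_kraus_step[OF g])

lemma sum_norm_sq_kraus_step_le:
  assumes g: "square_summable g"
  shows "sum_norm_sq (kraus_step g) \<le> c * sum_norm_sq g"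
  unfolding sum_norm_sq_def[of "kraus_step g"]
proof (rule infsum_le_finite_sums)
  show "(\<lambda>p. (norm (kraus_step g p))\<^sup>2) summable_on UNIV"
    using square_summable_kraus_step[OF g] by (simp add: square_summable_def)
  fix F :: "(nat list \<times> 'a) set" assume "finite F"
  have "(\<Sum>p\<in>F. (norm (kraus_step g p))\<^sup>2) = (\<Sum>p\<in>F \<inter> range cons_index. (norm (kraus_step g p))\<^sup>2)"
    by (rule sum.mono_neutral_right) (use \<open>finite F\<close> kraus_step_not_cons_index in force)+
  also have "F \<inter> range cons_index = cons_index ` (cons_index -` F)" by auto
  also have "(\<Sum>p\<in>cons_index ` (cons_index -` F). (norm (kraus_step g p))\<^sup>2)
      = (\<Sum>q\<in>cons_index -` F. (norm (A (fst q) (g (snd q))))\<^sup>2)"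
    by (subst sum.reindex) (auto intro: inj_on_subset[OF inj_cons_index] simp: kraus_step_cons_index)
  also have "\<dots> \<le> c * sum_norm_sq g"
    by (rule sum_norm_sq_pairs_le[OF g finite_vimageI[OF \<open>finite F\<close> inj_cons_index]])
  finally show "(\<Sum>p\<in>F. (norm (kraus_step g p))\<^sup>2) \<le> c * sum_norm_sq g" .
qed

end

section \<open>Sequences supported on an index set\<close>

text \<open>The statement works with raw sequences in \<open>l2 I\<close>; here they are identified with
  the subspace \<open>ell2_on I\<close> of \<open>ell2\<close>, and an operator \<open>T\<close> of \<open>l2 I\<close> with the operator
  \<open>lift_op I T\<close> on \<open>ell2\<close> that first projects onto \<open>ell2_on I\<close>.\<close>

definition ell2_on :: "nat set \<Rightarrow> ell2 set" where
  "ell2_on I = {x. \<forall>n. n \<notin> I \<longrightarrow> vec_of x n = 0}"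

lemma vec_of_mk_ell2: "x \<in> l2 I \<Longrightarrow> vec_of (mk_ell2 x) = x"
  unfolding l2_def by (auto simp: mk_ell2_inverse)

lemma mk_ell2_in_ell2_on: "x \<in> l2 I \<Longrightarrow> mk_ell2 x \<in> ell2_on I"
  using vec_of_mk_ell2 unfolding ell2_on_def l2_def by auto

lemma vec_of_in_l2: "h \<in> ell2_on I \<Longrightarrow> vec_of h \<in> l2 I"
  unfolding ell2_on_def l2_def by auto

lemma vec_of_in_l2_iff: "vec_of h \<in> l2 I \<longleftrightarrow> h \<in> ell2_on I"
  unfolding ell2_on_def l2_def by auto

lemma mk_ell2_vec_of [simp]: "mk_ell2 (vec_of h) = h" by (rule vec_of_inverse)

lemma inner_l2_vec_of: "inner_l2 (vec_of a) (vec_of b) = cinner a b"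
  by (simp add: inner_l2_def cinner_def)

lemma norm_l2_vec_of: "norm_l2 (vec_of a) = norm a"
  by transfer (simp add: norm_l2_def)

lemma ket_eq_vec_of: "ket m = vec_of (ket_ell2 m)"
  by (simp add: ket_def vec_of_ket_ell2 fun_eq_iff)

lemma vec_of_diff_fun: "(\<lambda>n. vec_of a n - vec_of b n) = vec_of (a - b)" by (simp add: fun_eq_iff)

lemma ell2_on_add: "a \<in> ell2_on I \<Longrightarrow> b \<in> ell2_on I \<Longrightarrow> a + b \<in> ell2_on I" by (simp add: ell2_on_def)
lemma ell2_on_diff: "a \<in> ell2_on I \<Longrightarrow> b \<in> ell2_on I \<Longrightarrow> a - b \<in> ell2_on I" by (simp add: ell2_on_def)
lemma ell2_on_cscale: "a \<in> ell2_on I \<Longrightarrow> cscale c a \<in> ell2_on I" by (simp add: ell2_on_def)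
lemma ell2_on_zero: "0 \<in> ell2_on I" by (simp add: ell2_on_def)
lemma ell2_on_sum: "(\<And>a. a \<in> F \<Longrightarrow> f a \<in> ell2_on I) \<Longrightarrow> sum f F \<in> ell2_on I"
  by (induction F rule: infinite_finite_induct) (auto simp: ell2_on_zero ell2_on_add)

lemma closed_ell2_on: "closed (ell2_on I)"
  unfolding closed_sequential_limits
proof (intro allI impI)
  fix X L assume X: "(\<forall>k. X k \<in> ell2_on I) \<and> X \<longlonglongrightarrow> L"
  have "vec_of L n = 0" if "n \<notin> I" for n
  proof -
    have "(\<lambda>k. vec_of (X k) n) \<longlonglongrightarrow> vec_of L n" using X by (intro tendsto_vec_of) simp
    moreover have "(\<lambda>k. vec_of (X k) n) = (\<lambda>k. 0)" using X that by (auto simp: ell2_on_def)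
    ultimately show ?thesis using LIMSEQ_unique tendsto_const by metis
  qed
  then show "L \<in> ell2_on I" by (simp add: ell2_on_def)
qed

definition restrict_ell2 :: "nat set \<Rightarrow> ell2 \<Rightarrow> ell2" where
  "restrict_ell2 I h = mk_ell2 (\<lambda>n. if n \<in> I then vec_of h n else 0)"

lemma vec_of_restrict: "vec_of (restrict_ell2 I h) n = (if n \<in> I then vec_of h n else 0)"
proof -
  have "summable (\<lambda>n. (cmod (if n \<in> I then vec_of h n else 0))\<^sup>2)"
  proof (rule summable_comparison_test'[where g="\<lambda>n. (cmod (vec_of h n))\<^sup>2" and N=0])
    fix n show "norm ((cmod (if n \<in> I then vec_of h n else 0))\<^sup>2) \<le> (cmod (vec_of h n))\<^sup>2"
      by (cases "n \<in> I") auto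
  qed simp
  then show ?thesis unfolding restrict_ell2_def by (simp add: mk_ell2_inverse)
qed

lemma restrict_in_ell2_on: "restrict_ell2 I h \<in> ell2_on I" by (simp add: ell2_on_def vec_of_restrict)
lemma restrict_ell2_on: "h \<in> ell2_on I \<Longrightarrow> restrict_ell2 I h = h" by (rule ell2_eqI) (auto simp: vec_of_restrict ell2_on_def)

lemma norm_restrict_le: "norm (restrict_ell2 I h) \<le> norm h"
proof -
  have "(norm (restrict_ell2 I h))\<^sup>2 \<le> (norm h)\<^sup>2"
    unfolding power2_norm_ell2
  proof (rule suminf_le)
    fix n show "(cmod (vec_of (restrict_ell2 I h) n))\<^sup>2 \<le> (cmod (vec_of h n))\<^sup>2" by (simp add: vec_of_restrict)
  qed (rule summable_norm_sq_vec_of)+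
  then show ?thesis by (rule power2_le_imp_le) simp
qed

lemma cinner_restrict: "b \<in> ell2_on I \<Longrightarrow> cinner (restrict_ell2 I a) b = cinner a b"
  unfolding cinner_def by (rule arg_cong[where f=suminf]) (auto simp: vec_of_restrict ell2_on_def fun_eq_iff)

definition lift_op :: "nat set \<Rightarrow> op \<Rightarrow> ell2 \<Rightarrow> ell2" where
  "lift_op I T h = mk_ell2 (T (vec_of (restrict_ell2 I h)))"

lemma bounded_op_l2: "bounded_op I T \<Longrightarrow> x \<in> l2 I \<Longrightarrow> T x \<in> l2 I" by (simp add: bounded_op_def)

lemma bounded_op_linear: "bounded_op I T \<Longrightarrow> x \<in> l2 I \<Longrightarrow> y \<in> l2 I \<Longrightarrow>
   T (\<lambda>n. a * x n + b * y n) = (\<lambda>n. a * T x n + b * T y n)" by (simp add: bounded_op_def)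

lemma bounded_op_zero: "bounded_op I T \<Longrightarrow> T (\<lambda>n. 0) = (\<lambda>n. 0)"
proof -
  assume T: "bounded_op I T"
  have z: "(\<lambda>n. 0::complex) \<in> l2 I" by (simp add: l2_def)
  show ?thesis using bounded_op_linear[OF T z z, of 0 0] by simp
qed

lemma vec_of_lift_op: "bounded_op I T \<Longrightarrow> vec_of (lift_op I T h) = T (vec_of (restrict_ell2 I h))"
  unfolding lift_op_def by (rule vec_of_mk_ell2[of _ I], rule bounded_op_l2) (auto intro: vec_of_in_l2 restrict_in_ell2_on)

lemma vec_of_lift_op_ell2_on: "bounded_op I T \<Longrightarrow> h \<in> ell2_on I \<Longrightarrow> vec_of (lift_op I T h) = T (vec_of h)"
  by (simp add: vec_of_lift_op restrict_ell2_on)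

lemma lift_op_in_ell2_on: "bounded_op I T \<Longrightarrow> lift_op I T h \<in> ell2_on I"
proof -
  assume T: "bounded_op I T"
  have "vec_of (lift_op I T h) \<in> l2 I" unfolding vec_of_lift_op[OF T] by (rule bounded_op_l2[OF T vec_of_in_l2[OF restrict_in_ell2_on]])
  then show ?thesis by (simp add: vec_of_in_l2_iff)
qed

lemma restrict_add: "restrict_ell2 I (x + y) = restrict_ell2 I x + restrict_ell2 I y" by (rule ell2_eqI) (simp add: vec_of_restrict)
lemma restrict_cscale: "restrict_ell2 I (cscale c x) = cscale c (restrict_ell2 I x)" by (rule ell2_eqI) (simp add: vec_of_restrict)

lemma bounded_clinear_lift_op:
  assumes T: "bounded_op I T"
  shows "bounded_clinear (lift_op I T)"
proof -
  obtain C where C: "\<forall>x\<in>l2 I. norm_l2 (T x) \<le> C * norm_l2 x" using T by (auto simp: bounded_op_def)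
  have l2P: "vec_of (restrict_ell2 I h) \<in> l2 I" for h by (rule vec_of_in_l2[OF restrict_in_ell2_on])
  show ?thesis
  proof (rule bounded_clinearI[where K="\<bar>C\<bar>"])
    fix x y
    have "vec_of (restrict_ell2 I (x + y)) = (\<lambda>n. 1 * vec_of (restrict_ell2 I x) n + 1 * vec_of (restrict_ell2 I y) n)"
      by (simp add: restrict_add fun_eq_iff)
    then have "T (vec_of (restrict_ell2 I (x + y))) = (\<lambda>n. 1 * T (vec_of (restrict_ell2 I x)) n + 1 * T (vec_of (restrict_ell2 I y)) n)"
      using bounded_op_linear[OF T l2P l2P, of 1 x 1 y] by (simp only:)
    then show "lift_op I T (x + y) = lift_op I T x + lift_op I T y"
      by (intro ell2_eqI) (simp add: vec_of_lift_op[OF T])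
  next
    fix c x
    have "vec_of (restrict_ell2 I (cscale c x)) = (\<lambda>n. c * vec_of (restrict_ell2 I x) n + 0 * vec_of (restrict_ell2 I x) n)"
      by (simp add: restrict_cscale fun_eq_iff)
    then have "T (vec_of (restrict_ell2 I (cscale c x))) = (\<lambda>n. c * T (vec_of (restrict_ell2 I x)) n + 0 * T (vec_of (restrict_ell2 I x)) n)"
      using bounded_op_linear[OF T l2P l2P, of c x 0 x] by (simp only:)
    then show "lift_op I T (cscale c x) = cscale c (lift_op I T x)"
      by (intro ell2_eqI) (simp add: vec_of_lift_op[OF T])
  next
    fix x
    have "norm (lift_op I T x) = norm_l2 (T (vec_of (restrict_ell2 I x)))"
      by (simp add: vec_of_lift_op[OF T, symmetric] norm_l2_vec_of)
    also have "\<dots> \<le> C * norm_l2 (vec_of (restrict_ell2 I x))" using C l2P by blast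
    also have "\<dots> \<le> \<bar>C\<bar> * norm (restrict_ell2 I x)" unfolding norm_l2_vec_of by (intro mult_right_mono) auto
    also have "\<dots> \<le> \<bar>C\<bar> * norm x" by (intro mult_left_mono norm_restrict_le) auto
    finally show "norm (lift_op I T x) \<le> norm x * \<bar>C\<bar>" by (simp add: mult.commute)
  qed
qed

lemma lift_op_ket_notin: "bounded_op I T \<Longrightarrow> m \<notin> I \<Longrightarrow> lift_op I T (ket_ell2 m) = 0"
proof -
  assume T: "bounded_op I T" and m: "m \<notin> I"
  have "restrict_ell2 I (ket_ell2 m) = 0" by (rule ell2_eqI) (use m in \<open>auto simp: vec_of_restrict vec_of_ket_ell2\<close>)
  have "vec_of (lift_op I T (ket_ell2 m)) = T (vec_of (restrict_ell2 I (ket_ell2 m)))" by (rule vec_of_lift_op[OF T])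
  also have "\<dots> = T (\<lambda>n. 0)" using \<open>restrict_ell2 I (ket_ell2 m) = 0\<close> by (simp only: vec_of_zero)
  also have "\<dots> = (\<lambda>n. 0)" by (rule bounded_op_zero[OF T])
  also have "\<dots> = vec_of 0" by (simp only: vec_of_zero)
  finally show ?thesis using vec_of_inject by blast
qed

lemma adj_vec_of:
  assumes T: "bounded_op I T"
  shows "adj I T (vec_of h) = vec_of (cadjoint (lift_op I T) h)"
proof -
  have L: "bounded_clinear (lift_op I T)" by (rule bounded_clinear_lift_op[OF T])
  show ?thesis
  proof
    fix m
    show "adj I T (vec_of h) m = vec_of (cadjoint (lift_op I T) h) m"
    proof (cases "m \<in> I")
      case True
      have "ket_ell2 m \<in> ell2_on I" using True by (auto simp: ell2_on_def vec_of_ket_ell2)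
      then have "T (ket m) = vec_of (lift_op I T (ket_ell2 m))" by (simp add: ket_eq_vec_of vec_of_lift_op_ell2_on[OF T])
      then show ?thesis using True by (simp add: adj_def inner_l2_vec_of vec_of_cadjoint[OF L])
    next
      case False thus ?thesis by (simp add: adj_def vec_of_cadjoint[OF L] lift_op_ket_notin[OF T])
    qed
  qed
qed

lemma cadjoint_lift_op_in_ell2_on:
  assumes T: "bounded_op I T"
  shows "cadjoint (lift_op I T) h \<in> ell2_on I"
  using lift_op_ket_notin[OF T] by (simp add: ell2_on_def vec_of_cadjoint[OF bounded_clinear_lift_op[OF T]])

lemma vec_of_add_mk_ell2:
  "y \<in> l2 I \<Longrightarrow> z \<in> l2 I \<Longrightarrow> vec_of (mk_ell2 y + mk_ell2 z) = (\<lambda>n. y n + z n)"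
  by (simp add: fun_eq_iff vec_of_mk_ell2)

lemma vec_of_cscale_mk_ell2: "z \<in> l2 I \<Longrightarrow> vec_of (cscale c (mk_ell2 z)) = (\<lambda>n. c * z n)"
  by (simp add: fun_eq_iff vec_of_mk_ell2)

lemma mk_ell2_add:
  "y \<in> l2 I \<Longrightarrow> z \<in> l2 I \<Longrightarrow> mk_ell2 (\<lambda>n. y n + z n) = mk_ell2 y + mk_ell2 z"
  by (simp flip: vec_of_add_mk_ell2)

lemma mk_ell2_scale: "z \<in> l2 I \<Longrightarrow> mk_ell2 (\<lambda>n. c * z n) = cscale c (mk_ell2 z)"
  by (simp flip: vec_of_cscale_mk_ell2)

lemma l2_add: "y \<in> l2 I \<Longrightarrow> z \<in> l2 I \<Longrightarrow> (\<lambda>n. y n + z n) \<in> l2 I"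
  by (simp flip: vec_of_add_mk_ell2 add: vec_of_in_l2 ell2_on_add mk_ell2_in_ell2_on)

lemma l2_scale: "z \<in> l2 I \<Longrightarrow> (\<lambda>n. c * z n) \<in> l2 I"
  by (simp flip: vec_of_cscale_mk_ell2 add: vec_of_in_l2 ell2_on_cscale mk_ell2_in_ell2_on)

lemma op_lim_eq:
  assumes S: "\<And>N. S N x = vec_of (F N)" and F: "F \<longlonglongrightarrow> L" and L: "L \<in> ell2_on I"
  shows "op_lim I S x = vec_of L"
  unfolding op_lim_def
proof (rule the_equality)
  have "(\<lambda>N. norm (F N - L)) \<longlonglongrightarrow> 0" using F by (simp add: tendsto_norm_zero_iff LIM_zero)
  then show "vec_of L \<in> l2 I \<and> (\<lambda>N. norm_l2 (\<lambda>n. S N x n - vec_of L n)) \<longlonglongrightarrow> 0"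
    using L by (simp add: S vec_of_diff_fun norm_l2_vec_of vec_of_in_l2)
next
  fix y assume y: "y \<in> l2 I \<and> (\<lambda>N. norm_l2 (\<lambda>n. S N x n - y n)) \<longlonglongrightarrow> 0"
  then have yv: "vec_of (mk_ell2 y) = y" using vec_of_mk_ell2 by blast
  have "(\<lambda>N. norm (F N - mk_ell2 y)) \<longlonglongrightarrow> 0"
    using y by (metis (no_types, lifting) S vec_of_diff_fun norm_l2_vec_of yv ext)
  then have "F \<longlonglongrightarrow> mk_ell2 y" by (simp add: tendsto_norm_zero_iff LIM_zero_cancel)
  then have "mk_ell2 y = L" using F LIMSEQ_unique by blast
  then show "y = vec_of L" using yv by auto
qed

section \<open>The Kraus map of the statement\<close>

locale kraus_setting =
  fixes I :: "nat set" and \<alpha> :: "nat \<Rightarrow> op" and c0 :: real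
  assumes bounded: "\<And>i. bounded_op I (\<alpha> i)"
    and kraus_bound: "\<And>K. finite K \<Longrightarrow>
      positive_op I (\<lambda>x n. complex_of_real c0 * x n - (\<Sum>i\<in>K. adj I (\<alpha> i) (\<alpha> i x) n))"
begin

abbreviation Kraus :: "nat \<Rightarrow> ell2 \<Rightarrow> ell2" where
  "Kraus i \<equiv> lift_op I (\<alpha> i)"

lemma bounded_clinear_Kraus: "bounded_clinear (Kraus i)"
  by (rule bounded_clinear_lift_op[OF bounded])

lemma inner_l2_kraus_bound:
  assumes "u \<in> ell2_on I"
  shows "inner_l2 (vec_of u) (\<lambda>n. complex_of_real c0 * vec_of u n - (\<Sum>i\<in>F. adj I (\<alpha> i) (\<alpha> i (vec_of u)) n))
    = complex_of_real (c0 * (norm u)\<^sup>2 - (\<Sum>i\<in>F. (norm (Kraus i u))\<^sup>2))"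
proof -
  have "(\<lambda>n. complex_of_real c0 * vec_of u n - (\<Sum>i\<in>F. adj I (\<alpha> i) (\<alpha> i (vec_of u)) n))
      = vec_of (cscale (complex_of_real c0) u - (\<Sum>i\<in>F. cadjoint (Kraus i) (Kraus i u)))"
    by (simp add: vec_of_lift_op_ell2_on[OF bounded assms, symmetric] adj_vec_of[OF bounded] fun_eq_iff)
  then show ?thesis
    by (simp add: inner_l2_vec_of cinner_diff_right cinner_cscale_right cinner_sum_right
        cinner_cadjoint_right[OF bounded_clinear_Kraus] cinner_self)
qed

lemma sum_norm_sq_Kraus_le:
  assumes "finite F"
  shows "(\<Sum>i\<in>F. (norm (Kraus i v))\<^sup>2) \<le> max c0 0 * (norm v)\<^sup>2"
proof -
  define u where "u = restrict_ell2 I v"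
  have u: "u \<in> ell2_on I" by (simp add: u_def restrict_in_ell2_on)
  have "Kraus i v = Kraus i u" for i
    by (simp add: u_def lift_op_def restrict_ell2_on[OF restrict_in_ell2_on])
  moreover have "0 \<le> c0 * (norm u)\<^sup>2 - (\<Sum>i\<in>F. (norm (Kraus i u))\<^sup>2)"
    using kraus_bound[OF assms] vec_of_in_l2[OF u]
    by (auto simp: positive_op_def inner_l2_kraus_bound[OF u])
  ultimately have "(\<Sum>i\<in>F. (norm (Kraus i v))\<^sup>2) \<le> c0 * (norm u)\<^sup>2" by simp
  also have "\<dots> \<le> max c0 0 * (norm v)\<^sup>2"
    unfolding u_def by (intro mult_mono power_mono norm_restrict_le) auto
  finally show ?thesis .
qed

sublocale kraus_family Kraus "max c0 0"
  by unfold_locales (auto intro: bounded_clinear_Kraus sum_norm_sq_Kraus_le)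

lemma kraus_step_in_ell2_on: "(\<And>p. g p \<in> ell2_on I) \<Longrightarrow> kraus_step g p \<in> ell2_on I"
  by (auto simp: kraus_step_def ell2_on_zero lift_op_in_ell2_on[OF bounded] split: list.split)

lemma rank_one_sum_in_ell2_on:
  "square_summable g \<Longrightarrow> (\<And>p. g p \<in> ell2_on I) \<Longrightarrow> rank_one_sum g u \<in> ell2_on I"
  unfolding ell2_on_def using vec_of_rank_one_sum_eq_0 by blast

lemma kraus_rank_one_sum:
  assumes g: "square_summable g" and g_on: "\<And>p. g p \<in> ell2_on I"
    and B: "\<And>x. x \<in> l2 I \<Longrightarrow> B x = vec_of (rank_one_sum g (mk_ell2 x))"
    and x: "x \<in> l2 I"
  shows "kraus I \<alpha> B x = vec_of (rank_one_sum (kraus_step g) (mk_ell2 x))"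
  unfolding kraus_def
proof (rule op_lim_eq)
  define h where "h = mk_ell2 x"
  have "adj I (\<alpha> i) x = vec_of (cadjoint (Kraus i) h)" for i
    using adj_vec_of[OF bounded, of i h] vec_of_mk_ell2[OF x] by (simp add: h_def)
  then have "\<alpha> i (B (adj I (\<alpha> i) x)) = vec_of (Kraus i (rank_one_sum g (cadjoint (Kraus i) h)))" for i
    using B[OF vec_of_in_l2[OF cadjoint_lift_op_in_ell2_on[OF bounded]]]
    by (simp add: vec_of_lift_op_ell2_on[OF bounded rank_one_sum_in_ell2_on[OF g g_on]])
  then show "(\<lambda>n. \<Sum>i<N. \<alpha> i (B (adj I (\<alpha> i) x)) n)
      = vec_of (\<Sum>i<N. Kraus i (rank_one_sum g (cadjoint (Kraus i) (mk_ell2 x))))" for N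
    by (simp add: fun_eq_iff h_def)
  show "(\<lambda>N. \<Sum>i<N. Kraus i (rank_one_sum g (cadjoint (Kraus i) (mk_ell2 x))))
      \<longlonglongrightarrow> rank_one_sum (kraus_step g) (mk_ell2 x)"
    by (rule tendsto_kraus_step[OF g])
  show "rank_one_sum (kraus_step g) (mk_ell2 x) \<in> ell2_on I"
    by (intro rank_one_sum_in_ell2_on square_summable_kraus_step kraus_step_in_ell2_on g g_on)
qed

text \<open>\<open>word_family g k (i\<^sub>1 \<dots> i\<^sub>k, m) = A\<^sub>i\<^sub>1 \<cdots> A\<^sub>i\<^sub>k g\<^sub>m\<close>: the vectors whose rank-one projections
  sum up to the \<open>k\<close>-th power of the Kraus map applied to \<open>\<Sum>\<^sub>m |g\<^sub>m\<rangle>\<langle>g\<^sub>m|\<close>.\<close>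

definition initial_family :: "(nat \<Rightarrow> ell2) \<Rightarrow> nat list \<times> nat \<Rightarrow> ell2" where
  "initial_family g p = (if fst p = [] then g (snd p) else 0)"

definition word_family :: "(nat \<Rightarrow> ell2) \<Rightarrow> nat \<Rightarrow> nat list \<times> nat \<Rightarrow> ell2" where
  "word_family g k = (kraus_step ^^ k) (initial_family g)"

lemma word_family_0: "word_family g 0 = initial_family g"
  by (simp add: word_family_def)

lemma word_family_Suc: "word_family g (Suc k) = kraus_step (word_family g k)"
  by (simp add: word_family_def)

lemma inj_Pair_Nil: "inj (Pair ([] :: nat list))"
  by (simp add: inj_def)

lemma initial_family_not_Nil: "p \<notin> range (Pair []) \<Longrightarrow> initial_family g p = 0"
  by (cases p) (auto simp: initial_family_def)

lemma square_summable_initial_family: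
  assumes g: "square_summable g"
  shows "square_summable (initial_family g)"
proof -
  have "(\<lambda>p. (norm (initial_family g p))\<^sup>2) summable_on range (Pair [])"
    using g summable_on_reindex[OF inj_on_subset[OF inj_Pair_Nil], of UNIV "\<lambda>p. (norm (initial_family g p))\<^sup>2"]
    by (simp add: square_summable_def comp_def initial_family_def)
  then show ?thesis unfolding square_summable_def
    by (rule summable_on_cong_neutral[THEN iffD1, rotated -1]) (auto simp: initial_family_not_Nil)
qed

lemma rank_one_sum_initial_family:
  assumes g: "square_summable g"
  shows "rank_one_sum (initial_family g) u = rank_one_sum g u"
proof -
  have "((\<lambda>p. rank_one (initial_family g p) u) has_sum rank_one_sum (initial_family g) u) (range (Pair []))"
    using has_sum_rank_one_sum[OF square_summable_initial_family[OF g]]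
    by (rule has_sum_cong_neutral[THEN iffD1, rotated -1]) (auto simp: initial_family_not_Nil)
  then have "(((\<lambda>p. rank_one (initial_family g p) u) \<circ> Pair []) has_sum rank_one_sum (initial_family g) u) UNIV"
    using has_sum_reindex[OF inj_on_subset[OF inj_Pair_Nil], of UNIV] by auto
  then have "((\<lambda>m. rank_one (g m) u) has_sum rank_one_sum (initial_family g) u) UNIV"
    by (simp add: comp_def initial_family_def)
  then show ?thesis using has_sum_rank_one_sum[OF g] has_sum_unique by blast
qed

lemma word_family_properties:
  assumes g: "square_summable g" and g_on: "\<And>m. g m \<in> ell2_on I"
  shows "square_summable (word_family g k) \<and> (\<forall>p. word_family g k p \<in> ell2_on I)
    \<and> sum_norm_sq (word_family g k) \<le> max c0 0 ^ k * sum_norm_sq (initial_family g)"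
proof (induction k)
  case 0
  have "initial_family g p \<in> ell2_on I" for p
    using g_on by (simp add: initial_family_def ell2_on_zero)
  then show ?case using square_summable_initial_family[OF g] by (simp add: word_family_0)
next
  case (Suc k)
  then have IH: "square_summable (word_family g k)" "\<And>p. word_family g k p \<in> ell2_on I"
    "sum_norm_sq (word_family g k) \<le> max c0 0 ^ k * sum_norm_sq (initial_family g)"
    by auto
  have "sum_norm_sq (word_family g (Suc k)) \<le> max c0 0 * sum_norm_sq (word_family g k)"
    unfolding word_family_Suc by (rule sum_norm_sq_kraus_step_le[OF IH(1)])
  also have "\<dots> \<le> max c0 0 ^ Suc k * sum_norm_sq (initial_family g)"
    using mult_left_mono[OF IH(3), of "max c0 0"] by (simp add: mult.assoc)
  finally show ?case
    using square_summable_kraus_step[OF IH(1)] kraus_step_in_ell2_on[of "word_family g k", OF IH(2)]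
    by (simp add: word_family_Suc)
qed

end

section \<open>Positive trace-class operators\<close>

lemma vec_of_lift_op_mk_ell2:
  "bounded_op I A \<Longrightarrow> x \<in> l2 I \<Longrightarrow> vec_of (lift_op I A (mk_ell2 x)) = A x"
  by (simp add: vec_of_lift_op_ell2_on mk_ell2_in_ell2_on vec_of_mk_ell2)

lemma pos_op_lift_op:
  assumes "bounded_op I A" "positive_op I A"
  shows "pos_op (lift_op I A)"
  unfolding pos_op_def
proof (intro conjI allI)
  show "bounded_clinear (lift_op I A)" by (rule bounded_clinear_lift_op[OF assms(1)])
  fix h
  have "cinner h (lift_op I A h) = cinner (restrict_ell2 I h) (lift_op I A h)"
    by (rule cinner_restrict[symmetric, OF lift_op_in_ell2_on[OF assms(1)]])
  also have "\<dots> = inner_l2 (vec_of (restrict_ell2 I h)) (A (vec_of (restrict_ell2 I h)))"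
    by (simp add: inner_l2_vec_of[symmetric] vec_of_lift_op[OF assms(1)])
  finally show "cinner h (lift_op I A h) \<in> \<real>" "0 \<le> Re (cinner h (lift_op I A h))"
    using assms(2) vec_of_in_l2[OF restrict_in_ell2_on] by (auto simp: positive_op_def)
qed

lemma diagonal_lift_op:
  assumes "bounded_op I A"
  shows "Re (cinner (ket_ell2 m) (lift_op I A (ket_ell2 m)))
    = (if m \<in> I then Re (inner_l2 (ket m) (A (ket m))) else 0)"
proof (cases "m \<in> I")
  case True
  then have "ket_ell2 m \<in> ell2_on I" by (auto simp: ell2_on_def vec_of_ket_ell2)
  then have "vec_of (lift_op I A (ket_ell2 m)) = A (ket m)"
    by (simp add: vec_of_lift_op_ell2_on[OF assms] ket_eq_vec_of)
  then show ?thesis using True by (metis cinner_ket_ell2_left inner_l2_vec_of ket_eq_vec_of)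
next
  case False
  then show ?thesis by (simp add: lift_op_ket_notin[OF assms])
qed

theorem C1_decomposition:
  assumes "C1 I A"
  obtains g :: "nat \<Rightarrow> ell2" where "square_summable g" "\<And>m. g m \<in> ell2_on I"
    "\<And>u. lift_op I A u = rank_one_sum g u"
proof -
  have A: "bounded_op I A" "positive_op I A" using assms by (auto simp: C1_def)
  have trace: "summable (\<lambda>m. Re (cinner (ket_ell2 m) (lift_op I A (ket_ell2 m))))"
    unfolding diagonal_lift_op[OF A(1)] using assms by (simp add: C1_def)
  have "pivots (lift_op I A) m \<in> ell2_on I" for m
    using lift_op_in_ell2_on[OF A(1)] vec_of_pivots_eq_0[of "lift_op I A"]
    by (auto simp: ell2_on_def)
  then show ?thesis
    using that[OF square_summable_pivots[OF pos_op_lift_op[OF A] trace]]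
      pos_op_eq_rank_one_sum[OF pos_op_lift_op[OF A] trace] by blast
qed

lemma bounded_op_vec_of:
  assumes T: "bounded_clinear T" and T_on: "\<And>u. T u \<in> ell2_on I"
  shows "bounded_op I (\<lambda>z. vec_of (T (mk_ell2 z)))"
  unfolding bounded_op_def
proof (intro conjI ballI allI)
  show "vec_of (T (mk_ell2 x)) \<in> l2 I" for x by (rule vec_of_in_l2[OF T_on])
  show "vec_of (T (mk_ell2 (\<lambda>n. a * x n + b * y n))) = (\<lambda>n. a * vec_of (T (mk_ell2 x)) n + b * vec_of (T (mk_ell2 y)) n)"
    if x: "x \<in> l2 I" and y: "y \<in> l2 I" for x y a b
  proof -
    have "mk_ell2 (\<lambda>n. a * x n + b * y n) = cscale a (mk_ell2 x) + cscale b (mk_ell2 y)"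
      using mk_ell2_add[OF l2_scale[OF x] l2_scale[OF y]] mk_ell2_scale[OF x] mk_ell2_scale[OF y] by simp
    then show ?thesis by (simp add: fun_eq_iff clinear_add[OF T] clinear_cscale[OF T])
  qed
  obtain K where "\<And>u. norm (T u) \<le> norm u * K" using bounded_clinear_pos_bounded[OF T] by blast
  then show "\<exists>C. \<forall>x\<in>l2 I. norm_l2 (vec_of (T (mk_ell2 x))) \<le> C * norm_l2 x"
    by (metis mult.commute norm_l2_vec_of vec_of_mk_ell2)
qed

lemma positive_op_vec_of:
  assumes "pos_op T"
  shows "positive_op I (\<lambda>z. vec_of (T (mk_ell2 z)))"
  unfolding positive_op_def
proof (intro ballI)
  fix x assume "x \<in> l2 I"
  then have "inner_l2 x (vec_of (T (mk_ell2 x))) = cinner (mk_ell2 x) (T (mk_ell2 x))"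
    by (simp add: inner_l2_vec_of[symmetric] vec_of_mk_ell2)
  then show "inner_l2 x (vec_of (T (mk_ell2 x))) \<in> \<real> \<and> 0 \<le> Re (inner_l2 x (vec_of (T (mk_ell2 x))))"
    using assms by (simp add: pos_op_def)
qed

lemma pos_op_rank_one: "pos_op (rank_one w)"
  by (simp add: pos_op_def bounded_clinear_rank_one cinner_rank_one_self)

lemma C1_rank_one:
  assumes "w \<in> ell2_on I"
  shows "C1 I (\<lambda>z. vec_of (rank_one w (mk_ell2 z)))"
proof -
  have diag: "Re (inner_l2 (ket n) (vec_of (rank_one w (mk_ell2 (ket n))))) = (cmod (vec_of w n))\<^sup>2" for n
    by (simp add: ket_eq_vec_of inner_l2_vec_of cinner_rank_one_self)
  have "summable (\<lambda>n. if n \<in> I then (cmod (vec_of w n))\<^sup>2 else 0)"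
    by (rule summable_comparison_test'[OF summable_norm_sq_vec_of[of w], where N=0]) auto
  moreover have "rank_one w u \<in> ell2_on I" for u
    using assms by (simp add: rank_one_def ell2_on_cscale)
  ultimately show ?thesis
    unfolding C1_def diag
    by (simp add: bounded_op_vec_of bounded_clinear_rank_one positive_op_vec_of pos_op_rank_one)
qed

context kraus_setting
begin

lemma kraus_power_eq:
  assumes g: "square_summable g" and g_on: "\<And>m. g m \<in> ell2_on I"
    and A: "\<And>x. x \<in> l2 I \<Longrightarrow> A x = vec_of (rank_one_sum g (mk_ell2 x))"
    and x: "x \<in> l2 I"
  shows "(kraus I \<alpha> ^^ k) A x = vec_of (rank_one_sum (word_family g k) (mk_ell2 x))"
  using x
proof (induction k arbitrary: x)
  case 0
  then show ?case by (simp add: A word_family_0 rank_one_sum_initial_family[OF g])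
next
  case (Suc k)
  then show ?case
    using kraus_rank_one_sum[of "word_family g k"] word_family_properties[OF g g_on, of k]
    by (simp add: word_family_Suc)
qed

definition kraus_power_form :: "(nat \<Rightarrow> ell2) \<Rightarrow> nat \<Rightarrow> ell2 \<Rightarrow> real" where
  "kraus_power_form g k h = infsum (\<lambda>p. (cmod (cinner (word_family g k p) h))\<^sup>2) UNIV"

lemma kraus_power_form_nonneg: "kraus_power_form g k h \<ge> 0"
  unfolding kraus_power_form_def by (rule infsum_nonneg) auto

lemma cinner_rank_one_sum_word_family:
  assumes "square_summable g" "\<And>m. g m \<in> ell2_on I"
  shows "cinner h (rank_one_sum (word_family g k) h) = complex_of_real (kraus_power_form g k h)"
  using word_family_properties[OF assms, of k]
  by (simp add: kraus_power_form_def cinner_rank_one_sum_self)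

lemma exp_kraus_eq_suminf:
  assumes g: "square_summable g" and g_on: "\<And>m. g m \<in> ell2_on I"
    and A: "\<And>x. x \<in> l2 I \<Longrightarrow> A x = vec_of (rank_one_sum g (mk_ell2 x))"
    and x: "x \<in> l2 I"
  defines "term \<equiv> \<lambda>k. cscale (complex_of_real (1 / fact k)) (rank_one_sum (word_family g k) (mk_ell2 x))"
  shows "summable term" and "exp_kraus I \<alpha> 1 A x = vec_of (suminf term)"
proof -
  note word = word_family_properties[OF g g_on]
  define H where "H = sum_norm_sq (initial_family g) * norm (mk_ell2 x)"
  have bound: "norm (term k) \<le> inverse (fact k) * max c0 0 ^ k * H" for k
  proof -
    have "cmod (complex_of_real (1 / fact k)) = 1 / fact k" by (simp only: norm_of_real) simp
    then have "norm (term k) = (1 / fact k) * norm (rank_one_sum (word_family g k) (mk_ell2 x))"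
      by (simp only: term_def norm_cscale)
    also have "\<dots> \<le> (1 / fact k) * (sum_norm_sq (word_family g k) * norm (mk_ell2 x))"
      using word[of k] by (intro mult_left_mono norm_rank_one_sum_le) auto
    also have "\<dots> \<le> (1 / fact k) * ((max c0 0 ^ k * sum_norm_sq (initial_family g)) * norm (mk_ell2 x))"
      using word[of k] by (intro mult_left_mono mult_right_mono) auto
    finally show ?thesis by (simp add: H_def inverse_eq_divide mult_ac)
  qed
  have "summable (\<lambda>k. inverse (fact k) * max c0 0 ^ k * H)"
    by (intro summable_mult2 summable_exp)
  then show sum: "summable term"
    by (rule summable_comparison_test'[where N=0]) (rule bound)
  show "exp_kraus I \<alpha> 1 A x = vec_of (suminf term)"
    unfolding exp_kraus_def
  proof (rule op_lim_eq)
    show "(\<lambda>n. \<Sum>k<N. complex_of_real (1 ^ k / fact k) * (kraus I \<alpha> ^^ k) A x n)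
        = vec_of (\<Sum>k<N. term k)" for N
      by (simp add: fun_eq_iff term_def kraus_power_eq[OF g g_on A x])
    show "(\<lambda>N. \<Sum>k<N. term k) \<longlonglongrightarrow> suminf term" by (rule summable_LIMSEQ[OF sum])
    moreover have "(\<Sum>k<N. term k) \<in> ell2_on I" for N
      unfolding term_def
      by (intro ell2_on_sum ell2_on_cscale rank_one_sum_in_ell2_on) (use word in blast)+
    ultimately show "suminf term \<in> ell2_on I"
      by (rule closed_sequentially[OF closed_ell2_on, rotated])
  qed
qed

lemma inner_l2_exp_kraus:
  assumes g: "square_summable g" and g_on: "\<And>m. g m \<in> ell2_on I"
    and A: "\<And>x. x \<in> l2 I \<Longrightarrow> A x = vec_of (rank_one_sum g (mk_ell2 x))"
    and x: "x \<in> l2 I"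
  shows "summable (\<lambda>k. kraus_power_form g k (mk_ell2 x) / fact k)"
    and "inner_l2 x (exp_kraus I \<alpha> 1 A x)
      = complex_of_real (\<Sum>k. kraus_power_form g k (mk_ell2 x) / fact k)"
proof -
  define h where "h = mk_ell2 x"
  define T where "T = (\<lambda>k. cscale (complex_of_real (1 / fact k)) (rank_one_sum (word_family g k) h))"
  note E = exp_kraus_eq_suminf[OF g g_on A x, folded h_def, folded T_def]
  have "(\<lambda>k. cinner h (T k)) sums cinner h (suminf T)"
    by (rule bounded_linear.sums[OF bounded_linear_cinner_right summable_sums[OF E(1)]])
  moreover have "cinner h (T k) = complex_of_real (kraus_power_form g k h / fact k)" for k
    by (simp add: T_def cinner_cscale_right cinner_rank_one_sum_word_family[OF g g_on])
  ultimately have sums: "(\<lambda>k. complex_of_real (kraus_power_form g k h / fact k)) sums cinner h (suminf T)"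
    by simp
  have "(\<lambda>k. kraus_power_form g k h / fact k) sums Re (cinner h (suminf T))"
    using sums_Re[OF sums] by (simp only: Re_complex_of_real)
  moreover have "(\<lambda>k. 0) sums Im (cinner h (suminf T))"
    using sums_Im[OF sums] by (simp only: Im_complex_of_real)
  then have "Im (cinner h (suminf T)) = 0" using sums_zero sums_unique2 by blast
  moreover have "inner_l2 x (exp_kraus I \<alpha> 1 A x) = cinner h (suminf T)"
    using vec_of_mk_ell2[OF x] by (simp add: E(2) h_def inner_l2_vec_of[symmetric])
  ultimately show "summable (\<lambda>k. kraus_power_form g k (mk_ell2 x) / fact k)"
    and "inner_l2 x (exp_kraus I \<alpha> 1 A x)
      = complex_of_real (\<Sum>k. kraus_power_form g k (mk_ell2 x) / fact k)"
    by (auto simp: h_def sums_iff complex_eq_iff)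
qed

end

section \<open>Cyclic vectors and ergodicity\<close>

lemma gen_alg_invariant:
  assumes add: "\<And>y z. y \<in> Z \<Longrightarrow> z \<in> Z \<Longrightarrow> (\<lambda>n. y n + z n) \<in> Z"
    and scale: "\<And>c z. z \<in> Z \<Longrightarrow> (\<lambda>n. c * z n) \<in> Z"
    and adj: "\<And>i z. z \<in> Z \<Longrightarrow> adj I (\<alpha> i) z \<in> Z"
    and "a \<in> gen_alg I \<alpha>" "z \<in> Z"
  shows "a z \<in> Z"
  using assms(4,5) by (induction arbitrary: z rule: gen_alg.induct) (auto intro: add scale adj)

lemma bounded_linear_eq_0_on_closure:
  assumes "bounded_linear L" "\<And>s. s \<in> S \<Longrightarrow> L s = 0" "y \<in> closure S"
  shows "L y = 0"
proof -
  have "closed {y. L y = 0}"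
    by (intro closed_Collect_eq linear_continuous_on continuous_on_const assms(1))
  then have "closure S \<subseteq> {y. L y = 0}" using assms(2) by (intro closure_minimal) auto
  then show ?thesis using assms(3) by blast
qed

context kraus_setting
begin

lemma adj_eq_vec_of_cadjoint: "z \<in> l2 I \<Longrightarrow> adj I (\<alpha> i) z = vec_of (cadjoint (Kraus i) (mk_ell2 z))"
  using adj_vec_of[OF bounded, of i "mk_ell2 z"] by (simp add: vec_of_mk_ell2)

lemma adj_in_l2: "z \<in> l2 I \<Longrightarrow> adj I (\<alpha> i) z \<in> l2 I"
  by (simp add: adj_eq_vec_of_cadjoint vec_of_in_l2 cadjoint_lift_op_in_ell2_on[OF bounded])

lemma mk_ell2_adj: "z \<in> l2 I \<Longrightarrow> mk_ell2 (adj I (\<alpha> i) z) = cadjoint (Kraus i) (mk_ell2 z)"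
  by (simp add: adj_eq_vec_of_cadjoint)

lemma gen_alg_l2: "a \<in> gen_alg I \<alpha> \<Longrightarrow> z \<in> l2 I \<Longrightarrow> a z \<in> l2 I"
  by (rule gen_alg_invariant[where Z="l2 I"]) (auto intro: l2_add l2_scale adj_in_l2)

definition orbit :: "(nat \<Rightarrow> complex) \<Rightarrow> ell2 set" where
  "orbit x = (\<lambda>a. mk_ell2 (a x)) ` gen_alg I \<alpha>"

lemma orbit_subset_ell2_on: "x \<in> l2 I \<Longrightarrow> orbit x \<subseteq> ell2_on I"
  by (auto simp: orbit_def intro: mk_ell2_in_ell2_on gen_alg_l2)

lemma cscale_in_orbit:
  assumes "x \<in> l2 I" "s \<in> orbit x"
  shows "cscale c s \<in> orbit x"
proof -
  obtain a where a: "a \<in> gen_alg I \<alpha>" "s = mk_ell2 (a x)" using assms(2) by (auto simp: orbit_def)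
  then have "cscale c s = mk_ell2 ((\<lambda>x n. c * a x n) x)"
    using mk_ell2_scale[OF gen_alg_l2[OF a(1) assms(1)]] by simp
  then show ?thesis unfolding orbit_def by (rule image_eqI[OF _ gen_alg.alg_scale[OF a(1)]])
qed

lemma subspace_orbit:
  assumes x: "x \<in> l2 I"
  shows "subspace (orbit x)"
  unfolding subspace_def
proof (intro conjI ballI allI)
  have "mk_ell2 (id x) \<in> orbit x" unfolding orbit_def by (rule imageI[OF gen_alg.alg_id])
  then show "0 \<in> orbit x" using cscale_in_orbit[OF x, of _ 0] by fastforce
  show "r *\<^sub>R s \<in> orbit x" if "s \<in> orbit x" for r s
    using cscale_in_orbit[OF x that, of "complex_of_real r"] by (simp add: cscale_of_real)
  fix s t assume "s \<in> orbit x" "t \<in> orbit x"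
  then obtain a b where a: "a \<in> gen_alg I \<alpha>" "s = mk_ell2 (a x)"
    and b: "b \<in> gen_alg I \<alpha>" "t = mk_ell2 (b x)" by (auto simp: orbit_def)
  then have "s + t = mk_ell2 ((\<lambda>x n. a x n + b x n) x)"
    using mk_ell2_add[OF gen_alg_l2[OF a(1) x] gen_alg_l2[OF b(1) x]] by simp
  then show "s + t \<in> orbit x"
    unfolding orbit_def by (rule image_eqI[OF _ gen_alg.alg_add[OF a(1) b(1)]])
qed

lemma cyclic_iff_closure_orbit:
  assumes x: "x \<in> l2 I"
  shows "cyclic I \<alpha> x \<longleftrightarrow> ell2_on I \<subseteq> closure (orbit x)"
proof -
  have dist: "norm_l2 (\<lambda>n. a x n - y n) = dist (mk_ell2 (a x)) (mk_ell2 y)"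
    if "a \<in> gen_alg I \<alpha>" "y \<in> l2 I" for a y
    using vec_of_mk_ell2[OF gen_alg_l2[OF that(1) x]] vec_of_mk_ell2[OF that(2)]
    by (simp add: dist_norm norm_l2_vec_of[symmetric] vec_of_diff_fun[symmetric])
  show ?thesis
  proof
    assume cyc: "cyclic I \<alpha> x"
    show "ell2_on I \<subseteq> closure (orbit x)"
    proof
      fix u assume u: "u \<in> ell2_on I"
      have "\<exists>s\<in>orbit x. dist s u < e" if e: "e > 0" for e
      proof -
        obtain a where a: "a \<in> gen_alg I \<alpha>" "norm_l2 (\<lambda>n. a x n - vec_of u n) < e"
          using cyc vec_of_in_l2[OF u] e unfolding cyclic_def by blast
        then show ?thesis using dist[OF a(1) vec_of_in_l2[OF u]] unfolding orbit_def by auto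
      qed
      then show "u \<in> closure (orbit x)" by (simp add: closure_approachable)
    qed
  next
    assume sub: "ell2_on I \<subseteq> closure (orbit x)"
    show "cyclic I \<alpha> x" unfolding cyclic_def
    proof (intro ballI allI impI)
      fix y and e :: real assume y: "y \<in> l2 I" and "e > 0"
      then obtain s where "s \<in> orbit x" "dist s (mk_ell2 y) < e"
        using sub mk_ell2_in_ell2_on[OF y] closure_approachable by blast
      then show "\<exists>a\<in>gen_alg I \<alpha>. norm_l2 (\<lambda>n. a x n - y n) < e"
        using dist[OF _ y] unfolding orbit_def by auto
    qed
  qed
qed

primrec adjoint_word :: "nat list \<Rightarrow> ell2 \<Rightarrow> ell2" where
  "adjoint_word [] h = h"
| "adjoint_word (i # ws) h = adjoint_word ws (cadjoint (Kraus i) h)"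

lemma bounded_clinear_adjoint_word: "bounded_clinear (adjoint_word ws)"
proof (induction ws)
  case Nil
  then show ?case using bounded_clinear_id by (simp add: id_def)
next
  case (Cons i ws)
  have "adjoint_word (i # ws) = adjoint_word ws \<circ> cadjoint (Kraus i)" by (simp add: fun_eq_iff)
  then show ?case
    using bounded_clinear_compose[OF Cons bounded_clinear_cadjoint[OF bounded_clinear_Kraus]] by (simp only:)
qed

lemma cinner_word_family:
  "cinner (word_family g k (ws, m)) h = (if length ws = k then cinner (g m) (adjoint_word ws h) else 0)"
proof (induction k arbitrary: ws h)
  case 0
  then show ?case by (cases ws) (auto simp: word_family_0 initial_family_def)
next
  case (Suc k)
  show ?case
  proof (cases ws)
    case Nil
    then show ?thesis by (simp add: word_family_Suc kraus_step_def)
  next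
    case (Cons i ws')
    then have "cinner (word_family g (Suc k) (ws, m)) h = cinner (word_family g k (ws', m)) (cadjoint (Kraus i) h)"
      by (simp add: word_family_Suc kraus_step_def cinner_cadjoint_right[OF bounded_clinear_Kraus])
    then show ?thesis by (simp add: Suc Cons)
  qed
qed

lemma kraus_power_forms_eq_0_imp:
  assumes g: "square_summable g" and g_on: "\<And>m. g m \<in> ell2_on I"
    and zero: "\<And>k. kraus_power_form g k h = 0"
  shows "rank_one_sum g (adjoint_word ws h) = 0"
proof (rule rank_one_sum_eq_0[OF g])
  fix m
  have "square_summable (word_family g (length ws))" using word_family_properties[OF g g_on] by blast
  then have "(cmod (cinner (word_family g (length ws) (ws, m)) h))\<^sup>2 = 0"
    using zero[of "length ws"] summable_on_cmod_cinner_sq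
    by (intro nonneg_infsum_le_0D[where A=UNIV]) (auto simp: kraus_power_form_def)
  then show "cinner (g m) (adjoint_word ws h) = 0" by (simp add: cinner_word_family)
qed

lemma orbit_subset_kernel:
  assumes L: "bounded_clinear L" and x: "x \<in> l2 I"
    and kill: "\<And>ws. L (adjoint_word ws (mk_ell2 x)) = 0" and "s \<in> orbit x"
  shows "L s = 0"
proof -
  define Z where "Z = {z \<in> l2 I. \<forall>ws. L (adjoint_word ws (mk_ell2 z)) = 0}"
  note W = bounded_clinear_adjoint_word
  have invariant: "a x \<in> Z" if "a \<in> gen_alg I \<alpha>" for a
  proof (rule gen_alg_invariant[OF _ _ _ that])
    show "x \<in> Z" using x kill by (simp add: Z_def)
    show "(\<lambda>n. y n + z n) \<in> Z" if "y \<in> Z" "z \<in> Z" for y z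
    proof -
      have y: "y \<in> l2 I" and z: "z \<in> l2 I" using that by (auto simp: Z_def)
      show ?thesis
        using that by (simp add: Z_def l2_add[OF y z] mk_ell2_add[OF y z] clinear_add[OF W] clinear_add[OF L])
    qed
    show "(\<lambda>n. c * z n) \<in> Z" if "z \<in> Z" for c z
    proof -
      have z: "z \<in> l2 I" using that by (auto simp: Z_def)
      show ?thesis
        using that by (simp add: Z_def l2_scale[OF z] mk_ell2_scale[OF z] clinear_cscale[OF W] clinear_cscale[OF L])
    qed
    show "adj I (\<alpha> i) z \<in> Z" if "z \<in> Z" for i z
    proof -
      have z: "z \<in> l2 I" and "\<And>ws. L (adjoint_word ws (mk_ell2 z)) = 0" using that by (auto simp: Z_def)
      then have "L (adjoint_word ws (cadjoint (Kraus i) (mk_ell2 z))) = 0" for ws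
        using adjoint_word.simps(2)[of i ws] by metis
      then show ?thesis by (simp add: Z_def adj_in_l2[OF z] mk_ell2_adj[OF z])
    qed
  qed
  obtain a where a: "a \<in> gen_alg I \<alpha>" "s = mk_ell2 (a x)"
    using \<open>s \<in> orbit x\<close> by (auto simp: orbit_def)
  then show ?thesis
    using invariant[OF a(1)] adjoint_word.simps(1) unfolding Z_def by (metis (mono_tags, lifting) mem_Collect_eq)
qed

lemma exp_kraus_form_pos:
  assumes A: "C1 I A" and nonzero: "\<exists>y\<in>l2 I. A y \<noteq> (\<lambda>n. 0)"
    and x: "x \<in> l2 I" and cyc: "cyclic I \<alpha> x"
  shows "inner_l2 x (exp_kraus I \<alpha> 1 A x) \<in> \<real> \<and> 0 < Re (inner_l2 x (exp_kraus I \<alpha> 1 A x))"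
proof -
  obtain g :: "nat \<Rightarrow> ell2" where g: "square_summable g" and g_on: "\<And>m. g m \<in> ell2_on I"
    and lift_eq: "\<And>u. lift_op I A u = rank_one_sum g u"
    using C1_decomposition[OF A] by blast
  have Ab: "bounded_op I A" using A by (simp add: C1_def)
  have A_eq: "A y = vec_of (rank_one_sum g (mk_ell2 y))" if "y \<in> l2 I" for y
    using vec_of_lift_op_mk_ell2[OF Ab that] by (simp add: lift_eq)
  define F where "F = (\<lambda>k. kraus_power_form g k (mk_ell2 x) / fact k)"
  have F: "summable F" and form: "inner_l2 x (exp_kraus I \<alpha> 1 A x) = complex_of_real (suminf F)"
    using inner_l2_exp_kraus[OF g g_on A_eq x] by (simp_all add: F_def)
  have F_nonneg: "F k \<ge> 0" for k by (simp add: F_def kraus_power_form_nonneg)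
  have "suminf F > 0"
  proof (rule ccontr)
    assume "\<not> suminf F > 0"
    then have "suminf F = 0" using suminf_nonneg[OF F F_nonneg] by linarith
    then have "kraus_power_form g k (mk_ell2 x) = 0" for k
      using suminf_eq_zero_iff[OF F F_nonneg] by (simp add: F_def)
    then have "lift_op I A (adjoint_word ws (mk_ell2 x)) = 0" for ws
      by (simp add: lift_eq kraus_power_forms_eq_0_imp[OF g g_on])
    then have "lift_op I A s = 0" if "s \<in> orbit x" for s
      by (rule orbit_subset_kernel[OF bounded_clinear_lift_op[OF Ab] x _ that])
    moreover have "u \<in> closure (orbit x)" if "u \<in> ell2_on I" for u
      using cyc that cyclic_iff_closure_orbit[OF x] by blast
    ultimately have "lift_op I A u = 0" if "u \<in> ell2_on I" for u
      by (rule bounded_linear_eq_0_on_closure[OF bounded_clinear_bounded_linear[OF bounded_clinear_lift_op[OF Ab]]])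
        (use that in simp_all)
    then have "A y = (\<lambda>n. 0)" if "y \<in> l2 I" for y
      using vec_of_lift_op_mk_ell2[OF Ab that] mk_ell2_in_ell2_on[OF that] by simp
    then show False using nonzero by blast
  qed
  then show ?thesis using form by simp
qed

theorem ergodic_if_cyclic:
  assumes cyc: "\<forall>x\<in>l2 I. x \<noteq> (\<lambda>n. 0) \<longrightarrow> cyclic I \<alpha> x"
  shows "ergodic I \<alpha>"
  unfolding ergodic_def
proof (intro allI impI)
  fix A assume "C1 I A \<and> (\<exists>x\<in>l2 I. A x \<noteq> (\<lambda>n. 0))"
  then have "strictly_positive_op I (exp_kraus I \<alpha> 1 A)"
    unfolding strictly_positive_op_def using cyc exp_kraus_form_pos by blast
  then show "\<exists>t>0. strictly_positive_op I (exp_kraus I \<alpha> t A)" by (intro exI[of _ 1]) simp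
qed

lemma exists_orthogonal_to_orbit:
  assumes x: "x \<in> l2 I" and "\<not> cyclic I \<alpha> x"
  obtains w where "w \<in> ell2_on I" "w \<noteq> 0" "\<And>s. s \<in> orbit x \<Longrightarrow> cinner w s = 0"
proof -
  obtain y where y: "y \<in> ell2_on I" "y \<notin> closure (orbit x)"
    using assms(2) cyclic_iff_closure_orbit[OF x] by blast
  obtain p where p: "p \<in> closure (orbit x)" "y - p \<noteq> 0" "\<And>s. s \<in> orbit x \<Longrightarrow> inner (y - p) s = 0"
    using exists_orthogonal_not_in_closure[OF subspace_orbit[OF x] y(2)] by blast
  \<comment> \<open>the orbit is a complex subspace, so real orthogonality already gives complex orthogonality\<close>
  have "cinner (y - p) s = 0" if "s \<in> orbit x" for s
  proof -
    have "Re (cinner (y - p) s) = 0" using p(3)[OF that] by (simp add: Re_cinner)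
    moreover have "Re (cinner (y - p) (cscale \<i> s)) = 0"
      using p(3)[OF cscale_in_orbit[OF x that]] by (simp add: Re_cinner)
    ultimately show ?thesis by (simp add: cinner_cscale_right complex_eq_iff)
  qed
  moreover have "p \<in> ell2_on I"
    using p(1) closure_minimal[OF orbit_subset_ell2_on[OF x] closed_ell2_on] by blast
  ultimately show ?thesis using that[of "y - p"] y(1) p(2) ell2_on_diff by blast
qed

lemma exp_kraus_vanishes:
  assumes adj_Z: "\<And>i z. z \<in> Z \<Longrightarrow> adj I (\<alpha> i) z \<in> Z"
    and B: "\<And>z. z \<in> Z \<Longrightarrow> B z = (\<lambda>n. 0)" and z: "z \<in> Z"
  shows "exp_kraus I \<alpha> t B z = (\<lambda>n. 0)"
proof -
  have power: "(kraus I \<alpha> ^^ k) B z = (\<lambda>n. 0)" if "z \<in> Z" for k z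
    using that
  proof (induction k arbitrary: z)
    case 0
    then show ?case using B by simp
  next
    case (Suc k)
    have "kraus I \<alpha> ((kraus I \<alpha> ^^ k) B) z
        = op_lim I (\<lambda>N x n. \<Sum>i<N. \<alpha> i ((kraus I \<alpha> ^^ k) B (adj I (\<alpha> i) x)) n) z"
      by (simp only: kraus_def[of I \<alpha> "(kraus I \<alpha> ^^ k) B"])
    also have "\<dots> = vec_of 0"
      by (rule op_lim_eq[where F="\<lambda>N. 0"])
        (simp_all add: Suc adj_Z bounded_op_zero[OF bounded] ell2_on_zero)
    finally show ?case by simp
  qed
  have "exp_kraus I \<alpha> t B z = vec_of 0"
    unfolding exp_kraus_def
    by (rule op_lim_eq[where F="\<lambda>N. 0"]) (simp_all add: power[OF z] ell2_on_zero)
  then show ?thesis by simp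
qed

theorem cyclic_if_ergodic:
  assumes erg: "ergodic I \<alpha>" and x: "x \<in> l2 I" "x \<noteq> (\<lambda>n. 0)"
  shows "cyclic I \<alpha> x"
proof (rule ccontr)
  assume "\<not> cyclic I \<alpha> x"
  then obtain w where w: "w \<in> ell2_on I" "w \<noteq> 0" and orth: "\<And>s. s \<in> orbit x \<Longrightarrow> cinner w s = 0"
    using exists_orthogonal_to_orbit[OF x(1)] by blast
  define A where "A = (\<lambda>z. vec_of (rank_one w (mk_ell2 z)))"
  have "rank_one w w \<noteq> 0" using w(2) by (simp add: rank_one_def cinner_self)
  then have "vec_of (rank_one w w) \<noteq> vec_of 0" using vec_of_inject by blast
  then have "A (vec_of w) \<noteq> (\<lambda>n. 0)" by (simp add: A_def)
  then have "\<exists>t>0. strictly_positive_op I (exp_kraus I \<alpha> t A)"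
    using erg C1_rank_one[OF w(1), folded A_def] vec_of_in_l2[OF w(1)] unfolding ergodic_def by blast
  then obtain t where pos: "strictly_positive_op I (exp_kraus I \<alpha> t A)" by blast
  \<comment> \<open>\<open>A\<close> vanishes on \<open>\<A>(\<alpha>) x\<close>, which is invariant under the \<open>\<alpha>\<^sub>i\<^sup>*\<close>\<close>
  have "exp_kraus I \<alpha> t A x = (\<lambda>n. 0)"
  proof (rule exp_kraus_vanishes[where Z="(\<lambda>a. a x) ` gen_alg I \<alpha>"])
    show "adj I (\<alpha> i) z \<in> (\<lambda>a. a x) ` gen_alg I \<alpha>" if z: "z \<in> (\<lambda>a. a x) ` gen_alg I \<alpha>" for i z
    proof -
      obtain a where "a \<in> gen_alg I \<alpha>" "z = a x" using z by blast
      then show ?thesis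
        by (intro image_eqI[where x="adj I (\<alpha> i) \<circ> a"]) (simp_all add: gen_alg.alg_mult gen_alg.alg_gen)
    qed
    show "A z = (\<lambda>n. 0)" if "z \<in> (\<lambda>a. a x) ` gen_alg I \<alpha>" for z
    proof -
      have "mk_ell2 z \<in> orbit x" using that by (auto simp: orbit_def)
      then show ?thesis by (simp add: A_def rank_one_def orth)
    qed
    show "x \<in> (\<lambda>a. a x) ` gen_alg I \<alpha>" by (rule image_eqI[OF _ gen_alg.alg_id]) simp
  qed
  then have "inner_l2 x (exp_kraus I \<alpha> t A x) = 0" by (simp add: inner_l2_def)
  then show False using pos x unfolding strictly_positive_op_def by fastforce
qed

end

theorem lemma3p4:
  fixes I :: "nat set" and \<alpha> :: "nat \<Rightarrow> op"
  assumes bdd: "\<And>i. bounded_op I (\<alpha> i)"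
    and kraus_bound: "\<exists>c::real. \<forall>K. finite K \<longrightarrow>
           positive_op I (\<lambda>x n. complex_of_real c * x n - (\<Sum>i\<in>K. adj I (\<alpha> i) (\<alpha> i x) n))"
  shows "ergodic I \<alpha> \<longleftrightarrow> (\<forall>x\<in>l2 I. x \<noteq> (\<lambda>n. 0) \<longrightarrow> cyclic I \<alpha> x)"
proof -
  obtain c where "\<forall>K. finite K \<longrightarrow>
      positive_op I (\<lambda>x n. complex_of_real c * x n - (\<Sum>i\<in>K. adj I (\<alpha> i) (\<alpha> i x) n))"
    using kraus_bound by blast
  then interpret kraus_setting I \<alpha> c
    using bdd by unfold_locales auto
  show ?thesis using ergodic_if_cyclic cyclic_if_ergodic by blast
qed

end
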